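(* Let $n\in\mathbb{N}_0=\{0,1,2,\dots\}$ and let $\varphi:[0,\infty)\to\mathbb{R}$ be continuous such that $x^m\varphi(x)$ is of bounded variation on $[0,\infty)$ for each $m=0,1,\dots,n$. Suppose $\varphi(x)=o(x^{-n})$ as $x\to\infty$ and $x^n\varphi(x)\in L_1(0,\infty)$. Let $\Phi(t)=\int_0^\infty e^{ixt}\,d\varphi(x)$. Then $\Phi$ is $n$ times differentiable on $\mathbb{R}_+$, its $n$-th derivative is $$\Phi^{(n)}(t)=\int_0^\infty (ix)^n e^{itx}\,d\varphi(x),$$ and $\Phi^{(n)}(t)\to 0$ as $|t|\to\infty$ if and only if the integral $$\Psi_n(t)=\int_0^\infty e^{itx}\,d\bigl(x^n\varphi(x)\bigr)$$ has a limit as $|t|\to\infty$. *)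

theory Defs
  imports "HOL-Analysis.Analysis" "HOL-Library.Landau_Symbols"
begin

definition bounded_variation_on :: "real set \<Rightarrow> (real \<Rightarrow> real) \<Rightarrow> bool" where
  "bounded_variation_on S f \<longleftrightarrow>
     (\<exists>B. \<forall>(k::nat) (x::nat \<Rightarrow> real).
        (\<forall>i\<le>k. x i \<in> S) \<and> (\<forall>i<k. x i < x (Suc i)) \<longrightarrow>
        (\<Sum>i<k. \<bar>f (x (Suc i)) - f (x i)\<bar>) \<le> B)"

definition has_RS_integral ::
  "(real \<Rightarrow> complex) \<Rightarrow> (real \<Rightarrow> real) \<Rightarrow> real \<Rightarrow> real \<Rightarrow> complex \<Rightarrow> bool" where
  "has_RS_integral f g a b I \<longleftrightarrow>
     (\<forall>\<epsilon>>0. \<exists>\<delta>>0. \<forall>(k::nat) (x::nat \<Rightarrow> real) (\<xi>::nat \<Rightarrow> real).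
        x 0 = a \<and> x k = b \<and>
        (\<forall>i<k. x i < x (Suc i) \<and> x (Suc i) - x i < \<delta> \<and> x i \<le> \<xi> i \<and> \<xi> i \<le> x (Suc i))
        \<longrightarrow> norm ((\<Sum>i<k. f (\<xi> i) * of_real (g (x (Suc i)) - g (x i))) - I) < \<epsilon>)"

definition RS_integral :: "(real \<Rightarrow> complex) \<Rightarrow> (real \<Rightarrow> real) \<Rightarrow> real \<Rightarrow> real \<Rightarrow> complex" where
  "RS_integral f g a b = (THE I. has_RS_integral f g a b I)"

definition RS_integral_0_inf :: "(real \<Rightarrow> complex) \<Rightarrow> (real \<Rightarrow> real) \<Rightarrow> complex" where
  "RS_integral_0_inf f g = Lim at_top (\<lambda>b. RS_integral f g 0 b)"

end

theory Submission
  imports Defs "HOL-Probability.Characteristic_Functions" "HOL-Probability.Sinc_Integral"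
begin

text \<open>
  Integration by parts turns each Riemann--Stieltjes integral into a Lebesgue integral: writing
  G_j(t) = \<integral>_0^\<infinity> x^j \<phi>(x) exp(itx) dx, one gets
  \<integral>_0^\<infinity> (ix)^k exp(itx) d\<phi>(x) = -[k = 0] \<phi>(0) - k i^k G_{k-1}(t) - i^{k+1} t G_k(t).
  Differentiation under the integral sign gives G_j' = i G_{j+1}, hence the derivatives of \<Phi>, and
  the same formula shows \<Phi>^(n) = i^n \<Psi>_n - n i^n G_{n-1}. As x^{n-1} \<phi> has bounded variation,
  t G_{n-1}(t) stays bounded, so \<Phi>^(n) \<rightarrow> 0 iff \<Psi>_n \<rightarrow> 0.
  It remains to see that a limit L of \<Psi>_n(t) = -g(0) - i t \<integral>_0^\<infinity> g(x) exp(itx) dx, where g = x^n \<phi>,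
  is 0. L is also the limit of the Abel means \<integral>_0^\<infinity> \<epsilon> exp(-\<epsilon>t) \<Psi>_n(t) dt as \<epsilon> \<rightarrow> 0; by Fubini
  these equal -g(0) - i \<integral>_0^\<infinity> g(x) \<epsilon> / (\<epsilon> - ix)^2 dx, and the kernel \<epsilon> / (\<epsilon> - ix)^2 has mass i
  and concentrates at 0, so they tend to -g(0) - i (i g(0)) = 0.
\<close>

section \<open>Riemann--Stieltjes integrals over compact intervals\<close>

lemma strict_chain_le:
  fixes x :: "nat \<Rightarrow> real"
  assumes "\<forall>i<k. x i < x (Suc i)" "i \<le> j" "j \<le> k"
  shows "x i \<le> x j"
proof -
  have "x (min m k) \<le> x (min (Suc m) k)" for m
    using assms(1) by (cases "m < k") (auto simp: min_def less_imp_le)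
  then have "x (min i k) \<le> x (min j k)"
    using lift_Suc_mono_le[of "\<lambda>m. x (min m k)"] assms(2) by blast
  then show ?thesis using assms(2,3) by (simp add: min_def)
qed

lemma strict_chain_in_Icc:
  fixes x :: "nat \<Rightarrow> real"
  assumes "\<forall>i<k. x i < x (Suc i)" "i \<le> k"
  shows "x i \<in> {x 0..x k}"
  using strict_chain_le[OF assms(1), of 0 i] strict_chain_le[OF assms(1), of i k] assms(2) by simp

lemma obtain_fine_partition:
  fixes a b \<delta> :: real
  assumes "a < b" "\<delta> > 0"
  obtains k x where "x 0 = a" "x k = b" "\<forall>i<k. x i < x (Suc i) \<and> x (Suc i) - x i < \<delta>"
proof -
  obtain k :: nat where k: "(b - a) / \<delta> < k" using reals_Archimedean2 by blast
  then have "k > 0" using assms by (smt (verit) divide_pos_pos of_nat_0_less_iff)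
  define x where "x i = a + (b - a) * real i / real k" for i
  have "x (Suc i) - x i = (b - a) / k" for i
    unfolding x_def by (simp add: diff_divide_distrib[symmetric] algebra_simps)
  moreover have "0 < (b - a) / k" "(b - a) / k < \<delta>"
    using assms k \<open>k > 0\<close> by (auto simp: field_simps)
  ultimately have "\<forall>i<k. x i < x (Suc i) \<and> x (Suc i) - x i < \<delta>" by (metis diff_gt_0_iff_gt)
  moreover have "x 0 = a" "x k = b" using \<open>k > 0\<close> by (auto simp: x_def)
  ultimately show ?thesis using that by blast
qed

lemma has_RS_integral_left_sums:
  assumes "has_RS_integral f g a b I" "\<epsilon> > 0"
  obtains \<delta> where "\<delta> > 0"
    "\<And>k x. x 0 = a \<Longrightarrow> x k = b \<Longrightarrow> \<forall>i<k. x i < x (Suc i) \<and> x (Suc i) - x i < \<delta> \<Longrightarrow>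
       norm ((\<Sum>i<k. f (x i) * of_real (g (x (Suc i)) - g (x i))) - I) < \<epsilon>"
proof -
  obtain \<delta> where "\<delta> > 0" and \<delta>: "\<forall>k x \<xi>. x 0 = a \<and> x k = b \<and>
      (\<forall>i<k. x i < x (Suc i) \<and> x (Suc i) - x i < \<delta> \<and> x i \<le> \<xi> i \<and> \<xi> i \<le> x (Suc i))
      \<longrightarrow> norm ((\<Sum>i<k. f (\<xi> i) * of_real (g (x (Suc i)) - g (x i))) - I) < \<epsilon>"
    using assms unfolding has_RS_integral_def by blast
  show ?thesis
    by (rule that[OF \<open>\<delta> > 0\<close>]) (use \<delta> in \<open>auto simp: less_imp_le\<close>)
qed

lemma has_RS_integral_unique:
  assumes ab: "a < b" and "has_RS_integral f g a b I" "has_RS_integral f g a b J"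
  shows "I = J"
proof (rule ccontr)
  assume "I \<noteq> J"
  define e where "e = norm (I - J) / 2"
  have e: "e > 0" using \<open>I \<noteq> J\<close> by (simp add: e_def)
  obtain d1 where "d1 > 0"
    and d1: "\<And>k x. x 0 = a \<Longrightarrow> x k = b \<Longrightarrow> \<forall>i<k. x i < x (Suc i) \<and> x (Suc i) - x i < d1 \<Longrightarrow>
       norm ((\<Sum>i<k. f (x i) * of_real (g (x (Suc i)) - g (x i))) - I) < e"
    using has_RS_integral_left_sums[OF assms(2) e] by blast
  obtain d2 where "d2 > 0"
    and d2: "\<And>k x. x 0 = a \<Longrightarrow> x k = b \<Longrightarrow> \<forall>i<k. x i < x (Suc i) \<and> x (Suc i) - x i < d2 \<Longrightarrow>
       norm ((\<Sum>i<k. f (x i) * of_real (g (x (Suc i)) - g (x i))) - J) < e"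
    using has_RS_integral_left_sums[OF assms(3) e] by blast
  obtain k x where x: "x 0 = a" "x k = b" "\<forall>i<k. x i < x (Suc i) \<and> x (Suc i) - x i < min d1 d2"
    using obtain_fine_partition[OF ab, of "min d1 d2"] \<open>d1 > 0\<close> \<open>d2 > 0\<close> by (metis min_less_iff_conj)
  define S where "S = (\<Sum>i<k. f (x i) * of_real (g (x (Suc i)) - g (x i)))"
  have "norm (S - I) < e" "norm (S - J) < e"
    unfolding S_def using x by (intro d1 d2; simp)+
  moreover have "norm (I - J) \<le> norm (S - J) + norm (S - I)"
    using norm_triangle_ineq4[of "S - J" "S - I"] by simp
  ultimately show False by (simp add: e_def)
qed

lemma RS_integral_eqI:
  assumes "a < b" "has_RS_integral f g a b I"
  shows "RS_integral f g a b = I"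
  unfolding RS_integral_def using has_RS_integral_unique[OF assms(1)] assms(2) by blast

lemma has_RS_integral_norm_le:
  assumes ab: "a < b" and I: "has_RS_integral f g a b I"
    and f: "\<And>x. x \<in> {a..b} \<Longrightarrow> norm (f x) \<le> 1"
    and var: "\<And>k x. \<forall>i\<le>k. x i \<in> {a..b} \<Longrightarrow> \<forall>i<k. x i < x (Suc i) \<Longrightarrow> (\<Sum>i<k. \<bar>g (x (Suc i)) - g (x i)\<bar>) \<le> B"
  shows "norm I \<le> B"
proof (rule field_le_epsilon)
  fix e :: real assume e: "e > 0"
  obtain d where "d > 0"
    and d: "\<And>k x. x 0 = a \<Longrightarrow> x k = b \<Longrightarrow> \<forall>i<k. x i < x (Suc i) \<and> x (Suc i) - x i < d \<Longrightarrow>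
       norm ((\<Sum>i<k. f (x i) * of_real (g (x (Suc i)) - g (x i))) - I) < e"
    using has_RS_integral_left_sums[OF I e] by blast
  obtain k x where x: "x 0 = a" "x k = b" "\<forall>i<k. x i < x (Suc i) \<and> x (Suc i) - x i < d"
    by (rule obtain_fine_partition[OF ab \<open>d > 0\<close>])
  define S where "S = (\<Sum>i<k. f (x i) * of_real (g (x (Suc i)) - g (x i)))"
  have close: "norm (S - I) < e" unfolding S_def using x by (rule d)
  have in_ab: "x i \<in> {a..b}" if "i \<le> k" for i
    using strict_chain_in_Icc[of k x i] x that by auto
  have "norm S \<le> (\<Sum>i<k. norm (f (x i)) * \<bar>g (x (Suc i)) - g (x i)\<bar>)"
    unfolding S_def by (rule order_trans[OF norm_sum]) (simp add: norm_mult flip: of_real_diff)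
  also have "\<dots> \<le> (\<Sum>i<k. \<bar>g (x (Suc i)) - g (x i)\<bar>)"
    by (intro sum_mono mult_left_le_one_le) (use f in_ab in auto)
  also have "\<dots> \<le> B" by (rule var) (use x in_ab in auto)
  finally have "norm S \<le> B" .
  moreover have "norm I \<le> norm S + norm (S - I)" using norm_triangle_ineq4[of S "S - I"] by simp
  ultimately show "norm I \<le> B + e" using close by linarith
qed

lemma integral_sum_strict_chain:
  fixes F :: "real \<Rightarrow> complex"
  assumes chain: "\<forall>i<k. x i < x (Suc i)" and F: "F integrable_on {x 0..x k}"
  shows "integral {x 0..x k} F = (\<Sum>i<k. integral {x i..x (Suc i)} F)"
proof -
  have "j \<le> k \<Longrightarrow> integral {x 0..x j} F = (\<Sum>i<j. integral {x i..x (Suc i)} F)" for j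
  proof (induction j)
    case (Suc j)
    have le: "x 0 \<le> x j" "x j \<le> x (Suc j)" "x (Suc j) \<le> x k"
      using strict_chain_le[OF chain] Suc.prems by auto
    have "F integrable_on {x 0..x (Suc j)}"
      by (rule integrable_subinterval_real[OF F]) (use le in auto)
    from Henstock_Kurzweil_Integration.integral_combine[OF le(1,2) this] Suc show ?case by simp
  qed simp
  then show ?thesis by simp
qed

lemma integral_deriv_mult_approx:
  fixes f f' :: "real \<Rightarrow> complex" and h :: "real \<Rightarrow> real"
  assumes cd: "c \<le> d" and p: "p \<in> {c..d}"
    and der: "\<And>y. y \<in> {c..d} \<Longrightarrow> (f has_vector_derivative f' y) (at y)"
    and cont: "continuous_on {c..d} f'" "continuous_on {c..d} h"
    and M: "\<And>y. y \<in> {c..d} \<Longrightarrow> norm (f' y) \<le> M"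
    and osc: "\<And>y. y \<in> {c..d} \<Longrightarrow> \<bar>h y - h p\<bar> \<le> \<eta>"
  shows "norm (integral {c..d} (\<lambda>y. f' y * of_real (h y)) - (f d - f c) * of_real (h p)) \<le> M * \<eta> * (d - c)"
proof -
  have "(f' has_integral (f d - f c)) {c..d}"
    using fundamental_theorem_of_calculus[OF cd] der has_vector_derivative_at_within by blast
  then have "((\<lambda>y. f' y * of_real (h p)) has_integral (f d - f c) * of_real (h p)) {c..d}"
    by (rule has_integral_mult_left)
  moreover have "((\<lambda>y. f' y * of_real (h y)) has_integral integral {c..d} (\<lambda>y. f' y * of_real (h y))) {c..d}"
    by (intro integrable_integral integrable_continuous_interval continuous_intros cont)
  ultimately have diff: "((\<lambda>y. f' y * of_real (h y) - f' y * of_real (h p)) has_integral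
      integral {c..d} (\<lambda>y. f' y * of_real (h y)) - (f d - f c) * of_real (h p)) {c..d}"
    by (rule has_integral_diff[rotated])
  have "M \<ge> 0" using order_trans[OF norm_ge_zero M[OF p]] .
  have "\<eta> \<ge> 0" using order_trans[OF abs_ge_zero osc[OF p]] .
  have "norm (f' y * of_real (h y) - f' y * of_real (h p)) \<le> M * \<eta>" if "y \<in> {c..d}" for y
  proof -
    have "norm (f' y * of_real (h y) - f' y * of_real (h p)) = norm (f' y) * \<bar>h y - h p\<bar>"
      by (metis norm_mult norm_of_real of_real_diff right_diff_distrib)
    also have "\<dots> \<le> M * \<eta>" using M[OF that] osc[OF that] \<open>M \<ge> 0\<close> by (intro mult_mono) auto
    finally show ?thesis .
  qed
  then show ?thesis
    using has_integral_bound_real[OF _ finite.emptyI diff, of "M * \<eta>"] \<open>M \<ge> 0\<close> \<open>\<eta> \<ge> 0\<close> cd by simp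
qed

lemma RS_term_by_parts_approx:
  fixes f f' :: "real \<Rightarrow> complex" and h :: "real \<Rightarrow> real"
  assumes \<xi>: "c \<le> \<xi>" "\<xi> \<le> d"
    and der: "\<And>y. y \<in> {c..d} \<Longrightarrow> (f has_vector_derivative f' y) (at y)"
    and cont: "continuous_on {c..d} f'" "continuous_on {c..d} h"
    and M: "\<And>y. y \<in> {c..d} \<Longrightarrow> norm (f' y) \<le> M"
    and osc: "\<And>y. y \<in> {c..d} \<Longrightarrow> \<bar>h y - h c\<bar> \<le> \<eta>" "\<And>y. y \<in> {c..d} \<Longrightarrow> \<bar>h y - h d\<bar> \<le> \<eta>"
  shows "norm (f \<xi> * of_real (h d - h c) - (f d * of_real (h d) - f c * of_real (h c))
           + integral {c..d} (\<lambda>y. f' y * of_real (h y))) \<le> M * \<eta> * (d - c)"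
proof -
  let ?I = "\<lambda>u v. integral {u..v} (\<lambda>y. f' y * of_real (h y))"
  have sub: "{c..\<xi>} \<subseteq> {c..d}" "{\<xi>..d} \<subseteq> {c..d}" using \<xi> by auto
  have "(\<lambda>y. f' y * of_real (h y)) integrable_on {c..d}"
    by (intro integrable_continuous_interval continuous_intros cont)
  from Henstock_Kurzweil_Integration.integral_combine[OF \<xi> this]
  have "?I c d = ?I c \<xi> + ?I \<xi> d" by simp
  then have "f \<xi> * of_real (h d - h c) - (f d * of_real (h d) - f c * of_real (h c)) + ?I c d
      = (?I c \<xi> - (f \<xi> - f c) * of_real (h c)) + (?I \<xi> d - (f d - f \<xi>) * of_real (h d))"
    by (simp add: algebra_simps)
  also have "norm \<dots> \<le> M * \<eta> * (\<xi> - c) + M * \<eta> * (d - \<xi>)"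
    by (intro norm_triangle_le add_mono integral_deriv_mult_approx)
       (use \<xi> sub der M osc in \<open>auto intro: continuous_on_subset[OF cont(1)] continuous_on_subset[OF cont(2)]\<close>)
  also have "\<dots> = M * \<eta> * (d - c)" by (simp add: algebra_simps)
  finally show ?thesis .
qed

lemma norm_RS_sum_sub_by_parts_le:
  fixes f f' :: "real \<Rightarrow> complex" and h :: "real \<Rightarrow> real"
  assumes x: "x 0 = a" "x k = b" and chain: "\<forall>i<k. x i < x (Suc i)"
    and tags: "\<And>i. i < k \<Longrightarrow> x i \<le> \<xi> i \<and> \<xi> i \<le> x (Suc i)"
    and der: "\<And>y. y \<in> {a..b} \<Longrightarrow> (f has_vector_derivative f' y) (at y)"
    and cont: "continuous_on {a..b} f'" "continuous_on {a..b} h"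
    and M: "\<And>y. y \<in> {a..b} \<Longrightarrow> norm (f' y) \<le> M"
    and osc: "\<And>i y. i < k \<Longrightarrow> y \<in> {x i..x (Suc i)} \<Longrightarrow> \<bar>h y - h (x i)\<bar> \<le> \<eta> \<and> \<bar>h y - h (x (Suc i))\<bar> \<le> \<eta>"
  shows "norm ((\<Sum>i<k. f (\<xi> i) * of_real (h (x (Suc i)) - h (x i)))
      - (f b * of_real (h b) - f a * of_real (h a) - integral {a..b} (\<lambda>y. f' y * of_real (h y)))) \<le> M * \<eta> * (b - a)"
proof -
  let ?F = "\<lambda>y. f' y * of_real (h y)"
  have sub: "{x i..x (Suc i)} \<subseteq> {a..b}" if "i < k" for i
    using strict_chain_in_Icc[OF chain, of i] strict_chain_in_Icc[OF chain, of "Suc i"] x that by auto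
  define T where "T i = f (\<xi> i) * of_real (h (x (Suc i)) - h (x i))
    - (f (x (Suc i)) * of_real (h (x (Suc i))) - f (x i) * of_real (h (x i))) + integral {x i..x (Suc i)} ?F" for i
  have "?F integrable_on {a..b}" by (intro integrable_continuous_interval continuous_intros cont)
  then have "integral {a..b} ?F = (\<Sum>i<k. integral {x i..x (Suc i)} ?F)"
    using integral_sum_strict_chain[OF chain] x by simp
  moreover have "f b * of_real (h b) - f a * of_real (h a)
      = (\<Sum>i<k. f (x (Suc i)) * of_real (h (x (Suc i))) - f (x i) * of_real (h (x i)))"
    using sum_lessThan_telescope[of "\<lambda>i. f (x i) * of_real (h (x i))" k] x by simp
  ultimately have "(\<Sum>i<k. f (\<xi> i) * of_real (h (x (Suc i)) - h (x i)))
      - (f b * of_real (h b) - f a * of_real (h a) - integral {a..b} ?F) = (\<Sum>i<k. T i)"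
    by (simp add: T_def sum.distrib sum_subtractf)
  also have "norm \<dots> \<le> (\<Sum>i<k. M * \<eta> * (x (Suc i) - x i))"
  proof (rule order_trans[OF norm_sum sum_mono])
    fix i assume "i \<in> {..<k}"
    then have i: "i < k" by simp
    show "norm (T i) \<le> M * \<eta> * (x (Suc i) - x i)"
      unfolding T_def
      by (rule RS_term_by_parts_approx)
         (use tags[OF i] sub[OF i] osc[OF i] der M in \<open>auto intro: continuous_on_subset[OF cont(1)] continuous_on_subset[OF cont(2)]\<close>)
  qed
  also have "\<dots> = M * \<eta> * (b - a)"
    using sum_lessThan_telescope[of x k] x by (simp add: sum_distrib_left[symmetric])
  finally show ?thesis .
qed

lemma has_RS_integral_by_parts:
  fixes f f' :: "real \<Rightarrow> complex" and h :: "real \<Rightarrow> real"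
  assumes ab: "a < b"
    and der: "\<And>y. y \<in> {a..b} \<Longrightarrow> (f has_vector_derivative f' y) (at y)"
    and cont: "continuous_on {a..b} f'" "continuous_on {a..b} h"
  shows "has_RS_integral f h a b
           (f b * of_real (h b) - f a * of_real (h a) - integral {a..b} (\<lambda>y. f' y * of_real (h y)))"
  unfolding has_RS_integral_def
proof (intro allI impI, goal_cases)
  case (1 e)
  obtain M where M: "\<And>y. y \<in> {a..b} \<Longrightarrow> norm (f' y) \<le> M" and "M > 0"
    using compact_imp_bounded[OF compact_continuous_image[OF cont(1) compact_Icc]]
    by (metis bounded_pos image_eqI)
  define \<eta> where "\<eta> = e / (2 * M * (b - a))"
  have "\<eta> > 0" using 1 \<open>M > 0\<close> ab by (simp add: \<eta>_def)
  then obtain \<delta> where "\<delta> > 0"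
    and \<delta>: "\<And>y z. y \<in> {a..b} \<Longrightarrow> z \<in> {a..b} \<Longrightarrow> dist z y < \<delta> \<Longrightarrow> \<bar>h z - h y\<bar> < \<eta>"
    using compact_uniformly_continuous[OF cont(2) compact_Icc]
    unfolding uniformly_continuous_on_def dist_real_def by metis
  have "M * \<eta> * (b - a) < e" using \<open>M > 0\<close> ab 1 by (simp add: \<eta>_def field_simps)
  show ?case
  proof (intro exI[of _ \<delta>] conjI allI impI \<open>\<delta> > 0\<close>, goal_cases)
    case (1 k x \<xi>)
    then have x: "x 0 = a" "x k = b" and chain: "\<forall>i<k. x i < x (Suc i)" by auto
    have "\<bar>h y - h (x i)\<bar> \<le> \<eta> \<and> \<bar>h y - h (x (Suc i))\<bar> \<le> \<eta>" if "i < k" "y \<in> {x i..x (Suc i)}" for i y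
      using \<delta>[of "x i" y] \<delta>[of "x (Suc i)" y] 1 that
        strict_chain_in_Icc[OF chain, of i] strict_chain_in_Icc[OF chain, of "Suc i"] x
      by (auto simp: dist_real_def)
    then show ?case
      using norm_RS_sum_sub_by_parts_le[OF x chain _ der cont M, of \<xi> \<eta>] 1 \<open>M * \<eta> * (b - a) < e\<close> by fastforce
  qed
qed

section \<open>Integrals over half-lines\<close>

lemma set_integrable_continuous_dominated:
  fixes f :: "real \<Rightarrow> 'b::{banach, second_countable_topology}" and g :: "real \<Rightarrow> real"
  assumes "S \<in> sets borel" "continuous_on S f" "set_integrable lborel S g"
    and "\<And>x. x \<in> S \<Longrightarrow> norm (f x) \<le> norm (g x)"
  shows "set_integrable lborel S f"
proof (rule set_integrable_bound[OF assms(3)])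
  show "set_borel_measurable lborel S f"
    unfolding set_borel_measurable_def using borel_measurable_continuous_on_indicator[OF assms(1,2)] by simp
qed (use assms(4) in auto)

lemma integral_Icc_tendsto_set_integral:
  fixes f :: "real \<Rightarrow> 'b::euclidean_space"
  assumes "set_integrable lborel {a..} f"
  shows "((\<lambda>b. integral {a..b} f) \<longlongrightarrow> (LINT x:{a..}|lborel. f x)) at_top"
proof -
  have "(LINT x:{a..b}|lborel. f x) = integral {a..b} f" for b
    by (rule set_borel_integral_eq_integral(2)) (rule set_integrable_subset[OF assms], auto)
  moreover have "((\<lambda>b. LINT x:{a..b}|lborel. f x) \<longlongrightarrow> (LINT x:{a..}|lborel. f x)) at_top"
    by (rule tendsto_set_lebesgue_integral_at_top[OF _ assms]) auto
  ultimately show ?thesis by simp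
qed

lemma set_integral_Ici_FTC:
  fixes f F :: "real \<Rightarrow> 'b::euclidean_space"
  assumes "set_integrable lborel {a..} f"
    and der: "\<And>x. x \<ge> a \<Longrightarrow> (F has_vector_derivative f x) (at x)"
    and lim: "(F \<longlongrightarrow> B) at_top"
  shows "(LINT x:{a..}|lborel. f x) = B - F a"
proof (rule tendsto_unique[OF _ integral_Icc_tendsto_set_integral[OF assms(1)]])
  have "\<forall>\<^sub>F b in at_top. F b - F a = integral {a..b} f"
    using eventually_ge_at_top[of a]
  proof eventually_elim
    case (elim b)
    have "(f has_integral (F b - F a)) {a..b}"
      by (rule fundamental_theorem_of_calculus[OF elim]) (auto intro: has_vector_derivative_at_within der)
    then show ?case by (simp add: integral_unique)
  qed
  moreover have "((\<lambda>b. F b - F a) \<longlongrightarrow> B - F a) at_top" by (intro tendsto_intros lim)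
  ultimately show "((\<lambda>b. integral {a..b} f) \<longlongrightarrow> B - F a) at_top"
    by (rule Lim_transform_eventually[rotated])
qed simp

lemma RS_integral_0_inf_by_parts:
  fixes f f' :: "real \<Rightarrow> complex" and h :: "real \<Rightarrow> real"
  assumes der: "\<And>y. (f has_vector_derivative f' y) (at y)"
    and cont: "continuous_on UNIV f'" "continuous_on {0..} h"
    and boundary: "((\<lambda>b. f b * of_real (h b)) \<longlongrightarrow> \<beta>) at_top"
    and integral: "((\<lambda>b. integral {0..b} (\<lambda>y. f' y * of_real (h y))) \<longlongrightarrow> J) at_top"
  shows "RS_integral_0_inf f h = \<beta> - f 0 * of_real (h 0) - J"
  unfolding RS_integral_0_inf_def
proof (rule tendsto_Lim)
  have "\<forall>\<^sub>F b in at_top. f b * of_real (h b) - f 0 * of_real (h 0) - integral {0..b} (\<lambda>y. f' y * of_real (h y))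
      = RS_integral f h 0 b"
    using eventually_gt_at_top[of 0]
  proof eventually_elim
    case (elim b)
    show ?case
      by (rule RS_integral_eqI[OF elim, symmetric], rule has_RS_integral_by_parts[OF elim der])
         (auto intro: continuous_on_subset[OF cont(1)] continuous_on_subset[OF cont(2)])
  qed
  moreover have "((\<lambda>b. f b * of_real (h b) - f 0 * of_real (h 0) - integral {0..b} (\<lambda>y. f' y * of_real (h y)))
      \<longlongrightarrow> \<beta> - f 0 * of_real (h 0) - J) at_top"
    by (intro tendsto_intros boundary integral)
  ultimately show "((\<lambda>b. RS_integral f h 0 b) \<longlongrightarrow> \<beta> - f 0 * of_real (h 0) - J) at_top"
    by (rule Lim_transform_eventually[rotated])
qed simp

lemma set_integrable_exp_Ici:
  fixes \<epsilon> :: real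
  assumes "\<epsilon> > 0"
  shows "set_integrable lborel {0..} (\<lambda>t. exp (-(\<epsilon> * t)))"
proof -
  have "set_integrable lborel {0..0} (\<lambda>t. exp (-(t * \<epsilon>)))"
    by (intro borel_integrable_atLeastAtMost' continuous_intros)
  then have "set_integrable lborel ({0..0} \<union> {0<..}) (\<lambda>t. exp (-(t * \<epsilon>)))"
    by (rule set_integrable_Un[OF _ integrable_I0i_exp_mscale[OF assms]]) auto
  moreover have "{0..0} \<union> {0<..} = {0::real..}" by auto
  ultimately show ?thesis by (simp add: mult.commute)
qed

lemma set_integrable_times_exp_Ici:
  fixes \<epsilon> :: real
  assumes "\<epsilon> > 0"
  shows "set_integrable lborel {0..} (\<lambda>t. t * exp (-(\<epsilon> * t)))"
proof (rule set_integrable_continuous_dominated)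
  show "set_integrable lborel {0..} (\<lambda>t. 2 / \<epsilon> * exp (-(\<epsilon> / 2 * t)))"
    using set_integrable_exp_Ici[of "\<epsilon> / 2"] assms by (intro set_integrable_mult_right) auto
  show "norm (t * exp (-(\<epsilon> * t))) \<le> norm (2 / \<epsilon> * exp (-(\<epsilon> / 2 * t)))" if "t \<in> {0..}" for t
  proof -
    have "\<epsilon> * t / 2 \<le> exp (\<epsilon> * t / 2)" using exp_ge_add_one_self[of "\<epsilon> * t / 2"] by linarith
    then have "\<epsilon> * t / 2 * exp (-(\<epsilon> * t)) \<le> exp (\<epsilon> * t / 2) * exp (-(\<epsilon> * t))"
      by (rule mult_right_mono) simp
    also have "\<dots> = exp (-(\<epsilon> / 2 * t))" by (simp flip: exp_add)
    finally show ?thesis using that assms by (simp add: field_simps)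
  qed
  show "continuous_on {0..} (\<lambda>t. t * exp (-(\<epsilon> * t)))" by (intro continuous_intros)
qed simp

lemma exp_neg_tendsto_0:
  fixes c :: real
  assumes "c > 0"
  shows "((\<lambda>t. exp (-(c * t))) \<longlongrightarrow> 0) at_top" and "((\<lambda>t. t * exp (-(c * t))) \<longlongrightarrow> 0) at_top"
proof -
  have lin: "filterlim (\<lambda>t. c * t) at_top at_top"
    by (intro filterlim_tendsto_pos_mult_at_top[where c=c] tendsto_const filterlim_ident assms)
  then have "filterlim (\<lambda>t. -(c * t)) at_bot at_top"
    by (simp add: filterlim_uminus_at_bot)
  from filterlim_compose[OF exp_at_bot this] show "((\<lambda>t. exp (-(c * t))) \<longlongrightarrow> 0) at_top" by simp
  from filterlim_compose[OF tendsto_power_div_exp_0[of 1] lin]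
  have "((\<lambda>t. 1 / c * (c * t / exp (c * t))) \<longlongrightarrow> 1 / c * 0) at_top" by (intro tendsto_intros) simp
  moreover have "1 / c * (c * t / exp (c * t)) = t * exp (-(c * t))" for t
    using assms by (simp add: exp_minus field_simps)
  ultimately show "((\<lambda>t. t * exp (-(c * t))) \<longlongrightarrow> 0) at_top" by simp
qed

lemma set_integral_exp_Ici:
  fixes \<epsilon> :: real
  assumes "\<epsilon> > 0"
  shows "(LINT t:{0..}|lborel. \<epsilon> * exp (-(\<epsilon> * t))) = 1"
proof -
  have "(LINT t:{0..}|lborel. \<epsilon> * exp (-(\<epsilon> * t))) = 0 - (- exp (-(\<epsilon> * 0)))"
  proof (rule set_integral_Ici_FTC)
    show "set_integrable lborel {0..} (\<lambda>t. \<epsilon> * exp (-(\<epsilon> * t)))"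
      using set_integrable_exp_Ici[OF assms] by (rule set_integrable_mult_right)
    show "((\<lambda>t. - exp (-(\<epsilon> * t))) has_vector_derivative \<epsilon> * exp (-(\<epsilon> * x))) (at x)" for x
      by (auto intro!: derivative_eq_intros simp flip: has_real_derivative_iff_has_vector_derivative)
    show "((\<lambda>t. - exp (-(\<epsilon> * t))) \<longlongrightarrow> 0) at_top"
      using tendsto_minus[OF exp_neg_tendsto_0(1)[OF assms]] by simp
  qed
  then show ?thesis by simp
qed

lemma times_exp_antiderivative:
  fixes a z :: complex
  assumes "a \<noteq> 0"
  shows "((\<lambda>z. -(z / a + 1 / a\<^sup>2) * exp (-(a * z))) has_field_derivative z * exp (-(a * z))) (at z)"
proof -
  have eq: "(\<lambda>z. -(z / a + 1 / a\<^sup>2) * exp (-(a * z))) = (\<lambda>z. -(z * (1 / a) + (1 / a)\<^sup>2) * exp (-(a * z)))"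
    by (simp add: power_one_over)
  have "((\<lambda>z. -(z * (1 / a) + (1 / a)\<^sup>2)) has_field_derivative -(1 / a)) (at z)"
    using assms by (auto intro!: derivative_eq_intros)
  moreover have "((\<lambda>z. exp (-(a * z))) has_field_derivative exp (-(a * z)) * (-a)) (at z)"
    by (auto intro!: derivative_eq_intros)
  ultimately have "((\<lambda>z. -(z * (1 / a) + (1 / a)\<^sup>2) * exp (-(a * z))) has_field_derivative
      -(1 / a) * exp (-(a * z)) + exp (-(a * z)) * (-a) * (-(z * (1 / a) + (1 / a)\<^sup>2))) (at z)"
    by (rule DERIV_mult)
  then show ?thesis
    unfolding eq by (rule DERIV_cong) (use assms in \<open>simp add: field_simps power2_eq_square\<close>)
qed

lemma set_integral_times_exp_cis_Ici:
  fixes \<epsilon> x :: real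
  assumes "\<epsilon> > 0"
  shows "(LINT t:{0..}|lborel. of_real (t * exp (-(\<epsilon> * t))) * cis (t * x)) = 1 / (of_real \<epsilon> - \<i> * of_real x)\<^sup>2"
proof -
  define a where "a = of_real \<epsilon> - \<i> * of_real x"
  have "a \<noteq> 0" using assms by (auto simp: a_def complex_eq_iff)
  have exp_a: "exp (-(a * of_real t)) = of_real (exp (-(\<epsilon> * t))) * cis (t * x)" for t
  proof -
    have "-(a * of_real t) = of_real (-(\<epsilon> * t)) + \<i> * of_real (t * x)" by (simp add: a_def algebra_simps)
    then show ?thesis by (simp only: exp_add exp_of_real cis_conv_exp)
  qed
  define F where "F z = -(z / a + 1 / a\<^sup>2) * exp (-(a * z))" for z
  have "(LINT t:{0..}|lborel. of_real (t * exp (-(\<epsilon> * t))) * cis (t * x)) = 0 - F (of_real 0)"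
  proof (rule set_integral_Ici_FTC[where F="\<lambda>t. F (of_real t)"])
    show "set_integrable lborel {0..} (\<lambda>t. of_real (t * exp (-(\<epsilon> * t))) * cis (t * x))"
    proof (rule set_integrable_continuous_dominated[OF _ _ set_integrable_times_exp_Ici[OF assms]])
      show "continuous_on {0..} (\<lambda>t. of_real (t * exp (-(\<epsilon> * t))) * cis (t * x))" by (intro continuous_intros)
    qed (simp_all add: norm_mult)
    show "((\<lambda>t. F (of_real t)) has_vector_derivative of_real (t * exp (-(\<epsilon> * t))) * cis (t * x)) (at t)" for t
      using has_vector_derivative_real_field[OF times_exp_antiderivative[OF \<open>a \<noteq> 0\<close>, of "of_real t"]]
      by (simp add: F_def exp_a mult.assoc)
    show "((\<lambda>t. F (of_real t)) \<longlongrightarrow> 0) at_top"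
    proof (rule Lim_null_comparison)
      show "\<forall>\<^sub>F t in at_top. norm (F (of_real t)) \<le> 1 / norm a * (t * exp (-(\<epsilon> * t))) + 1 / norm a ^ 2 * exp (-(\<epsilon> * t))"
        using eventually_ge_at_top[of 0]
      proof eventually_elim
        case (elim t)
        have "norm (F (of_real t)) \<le> (norm (of_real t / a) + norm (1 / a\<^sup>2)) * exp (-(\<epsilon> * t))"
          unfolding F_def norm_mult norm_minus_cancel
          by (intro mult_mono norm_triangle_ineq) (auto simp: a_def)
        also have "\<dots> = 1 / norm a * (t * exp (-(\<epsilon> * t))) + 1 / norm a ^ 2 * exp (-(\<epsilon> * t))"
          using elim by (simp add: norm_divide norm_power field_simps)
        finally show ?case .
      qed
      show "((\<lambda>t. 1 / norm a * (t * exp (-(\<epsilon> * t))) + 1 / norm a ^ 2 * exp (-(\<epsilon> * t))) \<longlongrightarrow> 0) at_top"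
        by (intro tendsto_add_zero tendsto_mult_right_zero exp_neg_tendsto_0 assms)
    qed
  qed
  then show ?thesis by (simp add: F_def a_def)
qed

section \<open>Fourier transforms over the half-line\<close>

definition fourier_Ici :: "(real \<Rightarrow> real) \<Rightarrow> real \<Rightarrow> complex" where
  "fourier_Ici g t = (LINT x:{0..}|lborel. of_real (g x) * cis (t * x))"

lemma set_integrable_mult_cis:
  assumes "continuous_on {0..} g" "set_integrable lborel {0..} g"
  shows "set_integrable lborel {0..} (\<lambda>x. of_real (g x) * cis (t * x))"
proof (rule set_integrable_continuous_dominated[OF _ _ assms(2)])
  show "continuous_on {0..} (\<lambda>x. of_real (g x) * cis (t * x))" by (intro continuous_intros assms(1))
qed (simp_all add: norm_mult)

lemma integral_Icc_tendsto_fourier_Ici: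
  assumes "continuous_on {0..} g" "set_integrable lborel {0..} g"
  shows "((\<lambda>b. integral {0..b} (\<lambda>x. of_real (g x) * cis (t * x))) \<longlongrightarrow> fourier_Ici g t) at_top"
  unfolding fourier_Ici_def by (rule integral_Icc_tendsto_set_integral[OF set_integrable_mult_cis[OF assms]])

lemma norm_fourier_Ici_le:
  assumes "continuous_on {0..} g" "set_integrable lborel {0..} g"
  shows "norm (fourier_Ici g t) \<le> (LINT x:{0..}|lborel. \<bar>g x\<bar>)"
  using set_integral_norm_bound[OF set_integrable_mult_cis[OF assms]] by (simp add: fourier_Ici_def norm_mult)

lemma cis_has_vector_derivative:
  "((\<lambda>x. cis (t * x)) has_vector_derivative (\<i> * of_real t) * cis (t * x)) (at x)"
  unfolding has_vector_derivative_def
  by (auto intro!: derivative_eq_intros simp: scaleR_conv_of_real mult_ac)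

lemma power_cis_has_vector_derivative:
  "((\<lambda>x. (\<i> * of_real x) ^ k * cis (t * x)) has_vector_derivative
     (of_nat k * \<i> * (\<i> * of_real x) ^ (k - 1) + (\<i> * of_real x) ^ k * (\<i> * of_real t)) * cis (t * x)) (at x)"
proof -
  have "((\<lambda>z. (\<i> * z) ^ k * exp (\<i> * of_real t * z)) has_field_derivative
     (of_nat k * \<i> * (\<i> * of_real x) ^ (k - 1) + (\<i> * of_real x) ^ k * (\<i> * of_real t)) * exp (\<i> * of_real t * of_real x)) (at (of_real x))"
    by (rule derivative_eq_intros refl)+ (simp add: ring_distribs mult_ac)
  from has_vector_derivative_real_field[OF this] show ?thesis by (simp add: cis_conv_exp mult_ac)
qed

text \<open>For \<open>k = 0\<close> the middle term vanishes, so the junk exponent \<open>k - 1 = 0\<close> is harmless.\<close>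
lemma RS_integral_0_inf_power_cis:
  fixes \<phi> :: "real \<Rightarrow> real"
  assumes cont: "continuous_on {0..} \<phi>"
    and lim: "((\<lambda>x. x ^ k * \<phi> x) \<longlongrightarrow> 0) at_top"
    and int: "set_integrable lborel {0..} (\<lambda>x. x ^ (k - 1) * \<phi> x)" "set_integrable lborel {0..} (\<lambda>x. x ^ k * \<phi> x)"
  shows "RS_integral_0_inf (\<lambda>x. (\<i> * of_real x) ^ k * cis (t * x)) \<phi>
    = - (if k = 0 then of_real (\<phi> 0) else 0)
      - of_nat k * \<i> ^ k * fourier_Ici (\<lambda>x. x ^ (k - 1) * \<phi> x) t
      - \<i> ^ Suc k * of_real t * fourier_Ici (\<lambda>x. x ^ k * \<phi> x) t"
proof -
  define c1 where "c1 = of_nat k * \<i> ^ k"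
  define c2 where "c2 = \<i> ^ Suc k * of_real t"
  define f' where "f' y = (of_nat k * \<i> * (\<i> * of_real y) ^ (k - 1) + (\<i> * of_real y) ^ k * (\<i> * of_real t)) * cis (t * y)" for y
  have split: "f' y * of_real (\<phi> y) = c1 * (of_real (y ^ (k - 1) * \<phi> y) * cis (t * y)) + c2 * (of_real (y ^ k * \<phi> y) * cis (t * y))" for y
    unfolding f'_def c1_def c2_def by (cases k) (simp_all add: power_mult_distrib algebra_simps)
  have cont_pow: "continuous_on {0..} (\<lambda>x. x ^ j * \<phi> x)" for j by (intro continuous_intros cont)
  have "RS_integral_0_inf (\<lambda>x. (\<i> * of_real x) ^ k * cis (t * x)) \<phi>
      = 0 - (\<i> * of_real 0) ^ k * cis (t * 0) * of_real (\<phi> 0)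
        - (c1 * fourier_Ici (\<lambda>x. x ^ (k - 1) * \<phi> x) t + c2 * fourier_Ici (\<lambda>x. x ^ k * \<phi> x) t)"
  proof (rule RS_integral_0_inf_by_parts[where f'=f'])
    show "((\<lambda>x. (\<i> * of_real x) ^ k * cis (t * x)) has_vector_derivative f' y) (at y)" for y
      unfolding f'_def by (rule power_cis_has_vector_derivative)
    show "continuous_on UNIV f'" unfolding f'_def by (intro continuous_intros)
    show "((\<lambda>b. (\<i> * of_real b) ^ k * cis (t * b) * of_real (\<phi> b)) \<longlongrightarrow> 0) at_top"
    proof (rule Lim_null_comparison)
      show "\<forall>\<^sub>F b in at_top. norm ((\<i> * of_real b) ^ k * cis (t * b) * of_real (\<phi> b)) \<le> \<bar>b ^ k * \<phi> b\<bar>"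
        using eventually_ge_at_top[of 0] by eventually_elim (simp add: norm_mult norm_power abs_mult)
    qed (rule tendsto_rabs_zero[OF lim])
    have "integral {0..b} (\<lambda>y. f' y * of_real (\<phi> y))
        = c1 * integral {0..b} (\<lambda>y. of_real (y ^ (k - 1) * \<phi> y) * cis (t * y))
        + c2 * integral {0..b} (\<lambda>y. of_real (y ^ k * \<phi> y) * cis (t * y))" for b
    proof -
      have "(\<lambda>y. of_real (y ^ j * \<phi> y) * cis (t * y)) integrable_on {0..b}" for j
        by (intro integrable_continuous_interval continuous_intros continuous_on_subset[OF cont]) auto
      then show ?thesis unfolding split by (subst integral_add) (auto intro: integrable_on_mult_right)
    qed
    moreover have "((\<lambda>b. c1 * integral {0..b} (\<lambda>y. of_real (y ^ (k - 1) * \<phi> y) * cis (t * y))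
        + c2 * integral {0..b} (\<lambda>y. of_real (y ^ k * \<phi> y) * cis (t * y)))
        \<longlongrightarrow> c1 * fourier_Ici (\<lambda>x. x ^ (k - 1) * \<phi> x) t + c2 * fourier_Ici (\<lambda>x. x ^ k * \<phi> x) t) at_top"
      by (intro tendsto_intros integral_Icc_tendsto_fourier_Ici cont_pow int)
    ultimately show "((\<lambda>b. integral {0..b} (\<lambda>y. f' y * of_real (\<phi> y)))
        \<longlongrightarrow> c1 * fourier_Ici (\<lambda>x. x ^ (k - 1) * \<phi> x) t + c2 * fourier_Ici (\<lambda>x. x ^ k * \<phi> x) t) at_top"
      by simp
  qed (rule cont)
  then show ?thesis by (simp add: c1_def c2_def)
qed

corollary RS_integral_0_inf_cis:
  assumes "continuous_on {0..} g" "(g \<longlongrightarrow> 0) at_top" "set_integrable lborel {0..} g"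
  shows "RS_integral_0_inf (\<lambda>x. cis (t * x)) g = - of_real (g 0) - \<i> * of_real t * fourier_Ici g t"
  using RS_integral_0_inf_power_cis[of g 0 t] assms by simp

lemma tendsto_set_integral_at_0_dominated:
  fixes F :: "real \<Rightarrow> real \<Rightarrow> real"
  assumes meas: "\<And>h. set_borel_measurable lborel S (F h)"
    and w: "set_integrable lborel S w"
    and bound: "\<And>h x. x \<in> S \<Longrightarrow> \<bar>F h x\<bar> \<le> w x"
    and lim: "\<And>x. x \<in> S \<Longrightarrow> ((\<lambda>h. F h x) \<longlongrightarrow> 0) (at 0)"
  shows "((\<lambda>h. LINT x:S|lborel. F h x) \<longlongrightarrow> 0) (at 0)"
  unfolding tendsto_at_iff_sequentially
proof (intro allI impI)
  fix X :: "nat \<Rightarrow> real" assume X: "\<forall>i. X i \<in> UNIV - {0}" "X \<longlonglongrightarrow> 0"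
  define s where "s = (\<lambda>i x. indicator S x *\<^sub>R F (X i) x)"
  have "(\<lambda>i. integral\<^sup>L lborel (s i)) \<longlonglongrightarrow> integral\<^sup>L lborel (\<lambda>x::real. 0::real)"
  proof (rule integral_dominated_convergence[where w="\<lambda>x. indicator S x *\<^sub>R w x"])
    show "s i \<in> borel_measurable lborel" for i
      using meas unfolding set_borel_measurable_def s_def by simp
    show "integrable lborel (\<lambda>x. indicator S x *\<^sub>R w x)" using w unfolding set_integrable_def .
    show "AE x in lborel. (\<lambda>i. s i x) \<longlonglongrightarrow> 0"
    proof (rule AE_I2)
      fix x show "(\<lambda>i. s i x) \<longlonglongrightarrow> 0"
      proof (cases "x \<in> S")
        case True
        then have "((\<lambda>h. F h x) \<circ> X) \<longlonglongrightarrow> 0"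
          using lim X unfolding tendsto_at_iff_sequentially by blast
        then show ?thesis using True by (simp add: o_def s_def)
      qed (simp add: s_def)
    qed
    show "AE x in lborel. norm (s i x) \<le> indicator S x *\<^sub>R w x" for i
      using bound by (auto simp: s_def split: split_indicator)
  qed simp
  then show "((\<lambda>h. LINT x:S|lborel. F h x) \<circ> X) \<longlonglongrightarrow> 0"
    by (simp add: set_lebesgue_integral_def o_def s_def)
qed

lemma norm_cis_sub_linear_le:
  shows "norm (cis y - 1 - \<i> * of_real y) \<le> y\<^sup>2 / 2"
    and "norm (cis y - 1 - \<i> * of_real y) \<le> 2 * \<bar>y\<bar>"
  using iexp_approx1[of y 1] iexp_approx2[of y 1] by (simp_all add: cis_conv_exp numeral_2_eq_2 diff_diff_eq)

lemma fourier_Ici_difference_quotient_le: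
  assumes cont: "continuous_on {0..} g"
    and int: "set_integrable lborel {0..} g" "set_integrable lborel {0..} (\<lambda>x. x * g x)"
  shows "norm (fourier_Ici g (t + h) - fourier_Ici g t - h *\<^sub>R (\<i> * fourier_Ici (\<lambda>x. x * g x) t)) / norm h
    \<le> (LINT x:{0..}|lborel. \<bar>g x\<bar> * norm (cis (h * x) - 1 - \<i> * of_real (h * x)) / \<bar>h\<bar>)"
proof -
  define R where "R x = of_real (g x) * cis (t * x) * (cis (h * x) - 1 - \<i> * of_real (h * x))" for x
  have cont': "continuous_on {0..} (\<lambda>x. x * g x)" by (intro continuous_intros cont)
  note I1 = set_integrable_mult_cis[OF cont int(1), of "t + h"]
  note I2 = set_integrable_mult_cis[OF cont int(1), of t]
  note I3 = set_integrable_mult_right[OF set_integrable_mult_cis[OF cont' int(2), of t], of "of_real h * \<i>"]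
  have R_eq: "of_real (g x) * cis ((t + h) * x) - of_real (g x) * cis (t * x) - of_real h * \<i> * (of_real (x * g x) * cis (t * x)) = R x" for x
    by (simp add: R_def distrib_right cis_mult[symmetric] algebra_simps)
  have I: "set_integrable lborel {0..} R"
    using set_integral_diff(1)[OF set_integral_diff(1)[OF I1 I2] I3] unfolding R_eq .
  have "fourier_Ici g (t + h) - fourier_Ici g t - h *\<^sub>R (\<i> * fourier_Ici (\<lambda>x. x * g x) t) = (LINT x:{0..}|lborel. R x)"
    unfolding R_eq[symmetric] set_integral_diff(2)[OF set_integral_diff(1)[OF I1 I2] I3] set_integral_diff(2)[OF I1 I2]
      set_integral_mult_right
    by (simp add: fourier_Ici_def scaleR_conv_of_real mult_ac)
  then have "norm (fourier_Ici g (t + h) - fourier_Ici g t - h *\<^sub>R (\<i> * fourier_Ici (\<lambda>x. x * g x) t))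
      \<le> (LINT x:{0..}|lborel. \<bar>g x\<bar> * norm (cis (h * x) - 1 - \<i> * of_real (h * x)))"
    using set_integral_norm_bound[OF I] by (simp add: R_def norm_mult)
  then show ?thesis by (simp add: divide_right_mono)
qed

lemma norm_cis_remainder_div_le:
  fixes h x :: real
  shows "norm (cis (h * x) - 1 - \<i> * of_real (h * x)) / \<bar>h\<bar> \<le> 2 * \<bar>x\<bar>"
    and "norm (cis (h * x) - 1 - \<i> * of_real (h * x)) / \<bar>h\<bar> \<le> x\<^sup>2 / 2 * \<bar>h\<bar>"
proof -
  show "norm (cis (h * x) - 1 - \<i> * of_real (h * x)) / \<bar>h\<bar> \<le> 2 * \<bar>x\<bar>"
  proof (cases "h = 0")
    case False
    have "norm (cis (h * x) - 1 - \<i> * of_real (h * x)) / \<bar>h\<bar> \<le> 2 * \<bar>h * x\<bar> / \<bar>h\<bar>"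
      by (rule divide_right_mono[OF norm_cis_sub_linear_le(2)]) simp
    also have "\<dots> = 2 * \<bar>x\<bar>" using False by (simp add: abs_mult)
    finally show ?thesis .
  qed simp
  show "norm (cis (h * x) - 1 - \<i> * of_real (h * x)) / \<bar>h\<bar> \<le> x\<^sup>2 / 2 * \<bar>h\<bar>"
  proof (cases "h = 0")
    case False
    have "norm (cis (h * x) - 1 - \<i> * of_real (h * x)) / \<bar>h\<bar> \<le> (h * x)\<^sup>2 / 2 / \<bar>h\<bar>"
      by (rule divide_right_mono[OF norm_cis_sub_linear_le(1)]) simp
    also have "\<dots> = x\<^sup>2 / 2 * \<bar>h\<bar>"
      using False by (simp add: power2_eq_square field_simps abs_mult_self_eq)
    finally show ?thesis .
  qed simp
qed

lemma fourier_Ici_difference_quotient_tendsto_0: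
  assumes cont: "continuous_on {0..} g" and int: "set_integrable lborel {0..} (\<lambda>x. x * g x)"
  shows "((\<lambda>h. LINT x:{0..}|lborel. \<bar>g x\<bar> * norm (cis (h * x) - 1 - \<i> * of_real (h * x)) / \<bar>h\<bar>) \<longlongrightarrow> 0) (at 0)"
proof (rule tendsto_set_integral_at_0_dominated[where w="\<lambda>x. 2 * \<bar>x * g x\<bar>"])
  show "set_borel_measurable lborel {0..} (\<lambda>x. \<bar>g x\<bar> * norm (cis (h * x) - 1 - \<i> * of_real (h * x)) / \<bar>h\<bar>)" for h
  proof -
    have "continuous_on {0..} (\<lambda>x. \<bar>g x\<bar> * norm (cis (h * x) - 1 - \<i> * of_real (h * x)) / \<bar>h\<bar>)"
    proof (cases "h = 0")
      case False
      then show ?thesis by (intro continuous_intros cont) simp_all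
    qed simp
    from borel_measurable_continuous_on_indicator[OF _ this] show ?thesis
      unfolding set_borel_measurable_def by simp
  qed
  show "set_integrable lborel {0..} (\<lambda>x. 2 * \<bar>x * g x\<bar>)"
    using set_integrable_abs[OF int] by (rule set_integrable_mult_right)
  show "\<bar>\<bar>g x\<bar> * norm (cis (h * x) - 1 - \<i> * of_real (h * x)) / \<bar>h\<bar>\<bar> \<le> 2 * \<bar>x * g x\<bar>" for h x
    using mult_left_mono[OF norm_cis_remainder_div_le(1)[of h x], of "\<bar>g x\<bar>"]
    by (simp add: abs_mult mult_ac)
  show "((\<lambda>h. \<bar>g x\<bar> * norm (cis (h * x) - 1 - \<i> * of_real (h * x)) / \<bar>h\<bar>) \<longlongrightarrow> 0) (at 0)" for x
  proof (rule Lim_null_comparison)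
    show "\<forall>\<^sub>F h in at 0. norm (\<bar>g x\<bar> * norm (cis (h * x) - 1 - \<i> * of_real (h * x)) / \<bar>h\<bar>) \<le> \<bar>g x\<bar> * (x\<^sup>2 / 2 * \<bar>h\<bar>)"
      using mult_left_mono[OF norm_cis_remainder_div_le(2)[of _ x], of "\<bar>g x\<bar>"]
      by (simp add: abs_mult mult_ac)
    have "((\<lambda>h. \<bar>g x\<bar> * (x\<^sup>2 / 2 * \<bar>h\<bar>)) \<longlongrightarrow> \<bar>g x\<bar> * (x\<^sup>2 / 2 * \<bar>0\<bar>)) (at 0)"
      by (intro tendsto_intros)
    then show "((\<lambda>h. \<bar>g x\<bar> * (x\<^sup>2 / 2 * \<bar>h\<bar>)) \<longlongrightarrow> 0) (at 0)" by simp
  qed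
qed

lemma fourier_Ici_has_vector_derivative:
  assumes cont: "continuous_on {0..} g"
    and int: "set_integrable lborel {0..} g" "set_integrable lborel {0..} (\<lambda>x. x * g x)"
  shows "(fourier_Ici g has_vector_derivative \<i> * fourier_Ici (\<lambda>x. x * g x) t) (at t)"
proof -
  have "((\<lambda>h. norm (fourier_Ici g (t + h) - fourier_Ici g t - h *\<^sub>R (\<i> * fourier_Ici (\<lambda>x. x * g x) t)) / norm h) \<longlongrightarrow> 0) (at 0)"
    using fourier_Ici_difference_quotient_tendsto_0[OF cont int(2)]
    by (rule Lim_null_comparison[OF always_eventually, rotated])
       (use fourier_Ici_difference_quotient_le[OF assms] in simp)
  then show ?thesis
    unfolding has_vector_derivative_def has_derivative_at by (simp add: bounded_linear_scaleR_left)
qed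

lemma bounded_variation_on_imp_bounded:
  assumes "bounded_variation_on S g"
  obtains B where "\<And>x. x \<in> S \<Longrightarrow> \<bar>g x\<bar> \<le> B"
proof (cases "S = {}")
  case False
  then obtain a where "a \<in> S" by blast
  obtain V where V: "\<And>k (x::nat \<Rightarrow> real). \<forall>i\<le>k. x i \<in> S \<Longrightarrow> \<forall>i<k. x i < x (Suc i) \<Longrightarrow>
      (\<Sum>i<k. \<bar>g (x (Suc i)) - g (x i)\<bar>) \<le> V"
    using assms unfolding bounded_variation_on_def by blast
  have step: "\<bar>g y - g z\<bar> \<le> V" if "y \<in> S" "z \<in> S" "z < y" for y z
    using V[of 1 "\<lambda>i. if i = 0 then z else y"] that by simp
  have "V \<ge> 0" using V[of 0 "\<lambda>_. a"] \<open>a \<in> S\<close> by simp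
  have "\<bar>g y - g a\<bar> \<le> V" if "y \<in> S" for y
    by (cases y a rule: linorder_cases)
       (use step[of a y] step[of y a] that \<open>a \<in> S\<close> \<open>V \<ge> 0\<close> in \<open>auto simp: abs_minus_commute\<close>)
  then have "\<bar>g y\<bar> \<le> \<bar>g a\<bar> + V" if "y \<in> S" for y
    using that by (smt (verit))
  then show ?thesis using that by blast
qed (use that in blast)

text \<open>By parts, i t \<integral>_0^b g(x) exp(itx) dx is a boundary term minus \<integral>_0^b exp(itx) dg(x), and the
  variation of g bounds the latter uniformly in b and t.\<close>
lemma abs_mult_norm_fourier_Ici_le:
  assumes cont: "continuous_on {0..} g" and int: "set_integrable lborel {0..} g"
    and var: "\<And>k x. \<forall>i\<le>k. x i \<in> {0..} \<Longrightarrow> \<forall>i<k. x i < x (Suc i) \<Longrightarrow> (\<Sum>i<k. \<bar>g (x (Suc i)) - g (x i)\<bar>) \<le> V"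
    and bound: "\<And>x. x \<ge> 0 \<Longrightarrow> \<bar>g x\<bar> \<le> B"
  shows "\<bar>t\<bar> * norm (fourier_Ici g t) \<le> V + 2 * B"
proof -
  define I where "I b = integral {0..b} (\<lambda>y. of_real (g y) * cis (t * y))" for b
  have bound_I: "norm (\<i> * of_real t * I b) \<le> V + 2 * B" if b: "b > 0" for b
  proof -
    define S where "S = cis (t * b) * of_real (g b) - of_real (g 0) - \<i> * of_real t * I b"
    have "has_RS_integral (\<lambda>x. cis (t * x)) g 0 b
        (cis (t * b) * of_real (g b) - cis (t * 0) * of_real (g 0) - integral {0..b} (\<lambda>y. \<i> * of_real t * cis (t * y) * of_real (g y)))"
      by (rule has_RS_integral_by_parts[OF b cis_has_vector_derivative])
         (intro continuous_intros, rule continuous_on_subset[OF cont], auto)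
    then have "has_RS_integral (\<lambda>x. cis (t * x)) g 0 b S"
      by (simp add: S_def I_def mult_ac flip: Henstock_Kurzweil_Integration.integral_mult_right)
    then have "norm S \<le> V"
      by (rule has_RS_integral_norm_le[OF b]) (auto intro: var)
    have eq: "\<i> * of_real t * I b = cis (t * b) * of_real (g b) - of_real (g 0) - S" by (simp add: S_def)
    have "norm (\<i> * of_real t * I b) \<le> norm (cis (t * b) * of_real (g b) - of_real (g 0)) + norm S"
      unfolding eq by (rule norm_triangle_ineq4)
    also have "\<dots> \<le> (norm (cis (t * b) * of_real (g b)) + norm (of_real (g 0) :: complex)) + V"
      by (intro add_mono norm_triangle_ineq4 \<open>norm S \<le> V\<close>)
    also have "\<dots> \<le> (B + B) + V"
      using bound[of b] bound[of 0] b by (intro add_mono) (auto simp: norm_mult)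
    finally show ?thesis by simp
  qed
  have "((\<lambda>b. norm (\<i> * of_real t * I b)) \<longlongrightarrow> norm (\<i> * of_real t * fourier_Ici g t)) at_top"
    unfolding I_def by (intro tendsto_intros integral_Icc_tendsto_fourier_Ici cont int)
  then have "norm (\<i> * of_real t * fourier_Ici g t) \<le> V + 2 * B"
    by (rule tendsto_upperbound) (auto intro: eventually_mono[OF eventually_gt_at_top[of 0] bound_I])
  then show ?thesis by (simp add: norm_mult)
qed

lemma fourier_Ici_tendsto_0_at_infinity:
  assumes "continuous_on {0..} g" "set_integrable lborel {0..} g" "bounded_variation_on {0..} g"
  shows "(fourier_Ici g \<longlongrightarrow> 0) at_infinity"
proof -
  obtain V where V: "\<And>k x. \<forall>i\<le>k. x i \<in> {0..} \<Longrightarrow> \<forall>i<k. x i < x (Suc i) \<Longrightarrow> (\<Sum>i<k. \<bar>g (x (Suc i)) - g (x i)\<bar>) \<le> V"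
    using assms(3) unfolding bounded_variation_on_def by blast
  obtain B where "\<And>x. x \<in> {0..} \<Longrightarrow> \<bar>g x\<bar> \<le> B"
    using bounded_variation_on_imp_bounded[OF assms(3)] by blast
  then have bound: "\<bar>t\<bar> * norm (fourier_Ici g t) \<le> V + 2 * B" for t
    by (intro abs_mult_norm_fourier_Ici_le assms(1,2) V) auto
  show ?thesis
  proof (rule Lim_null_comparison)
    show "\<forall>\<^sub>F t in at_infinity. norm (fourier_Ici g t) \<le> (V + 2 * B) * norm (inverse t)"
      unfolding eventually_at_infinity
    proof (intro exI[of _ 1] allI impI)
      fix t :: real assume "1 \<le> norm t"
      then have "\<bar>t\<bar> > 0" by simp
      then have "norm (fourier_Ici g t) \<le> (V + 2 * B) / \<bar>t\<bar>"
        using bound[of t] by (simp add: pos_le_divide_eq mult.commute)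
      then show "norm (fourier_Ici g t) \<le> (V + 2 * B) * norm (inverse t)"
        by (simp add: norm_inverse divide_inverse)
    qed
    show "((\<lambda>t::real. (V + 2 * B) * norm (inverse t)) \<longlongrightarrow> 0) at_infinity"
      using tendsto_mult_right_zero[OF tendsto_norm_zero[OF tendsto_inverse_0]] .
  qed
qed

section \<open>Abel means\<close>

text \<open>abel_kernel \<epsilon> x = \<integral>_0^\<infinity> \<epsilon> t exp(-\<epsilon>t) exp(itx) dt: the Abel weights after Fubini.\<close>
definition abel_kernel :: "real \<Rightarrow> real \<Rightarrow> complex" where
  "abel_kernel \<epsilon> x = of_real \<epsilon> / (of_real \<epsilon> - \<i> * of_real x)\<^sup>2"

lemma abel_kernel_denominator_nonzero: "\<epsilon> > 0 \<Longrightarrow> of_real \<epsilon> - \<i> * of_real x \<noteq> 0"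
  by (auto simp: complex_eq_iff)

lemma continuous_on_abel_kernel: "\<epsilon> > 0 \<Longrightarrow> continuous_on S (abel_kernel \<epsilon>)"
  unfolding abel_kernel_def[abs_def]
  by (intro continuous_intros) (auto simp: abel_kernel_denominator_nonzero)

lemma norm_abel_kernel: "\<epsilon> > 0 \<Longrightarrow> norm (abel_kernel \<epsilon> x) = \<epsilon> / (\<epsilon>\<^sup>2 + x\<^sup>2)"
  by (simp add: abel_kernel_def norm_divide norm_power cmod_power2)

lemma norm_abel_kernel_le:
  assumes "\<epsilon> > 0"
  shows "norm (abel_kernel \<epsilon> x) \<le> 1 / \<epsilon>" and "x \<noteq> 0 \<Longrightarrow> norm (abel_kernel \<epsilon> x) \<le> \<epsilon> / x\<^sup>2"
proof -
  have "\<epsilon>\<^sup>2 + x\<^sup>2 > 0" using assms by (simp add: add_pos_nonneg)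
  then show "norm (abel_kernel \<epsilon> x) \<le> 1 / \<epsilon>"
    using assms by (simp add: norm_abel_kernel field_simps power2_eq_square)
  show "norm (abel_kernel \<epsilon> x) \<le> \<epsilon> / x\<^sup>2" if "x \<noteq> 0"
    using assms that \<open>\<epsilon>\<^sup>2 + x\<^sup>2 > 0\<close> by (simp add: norm_abel_kernel divide_left_mono)
qed

lemma integral_abel_kernel:
  assumes "\<epsilon> > 0" "\<delta> \<ge> 0"
  shows "integral {0..\<delta>} (abel_kernel \<epsilon>) = \<i> - \<i> * of_real \<epsilon> / (of_real \<epsilon> - \<i> * of_real \<delta>)"
proof -
  define K where "K z = - \<i> * of_real \<epsilon> * inverse (of_real \<epsilon> - \<i> * z)" for z
  have "((\<lambda>y. K (of_real y)) has_vector_derivative abel_kernel \<epsilon> y) (at y)" for y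
  proof -
    have nz: "of_real \<epsilon> - \<i> * of_real y \<noteq> 0" by (rule abel_kernel_denominator_nonzero[OF assms(1)])
    have "(K has_field_derivative - \<i> * of_real \<epsilon> * (- (inverse (of_real \<epsilon> - \<i> * of_real y) * (0 - \<i> * 1) * inverse (of_real \<epsilon> - \<i> * of_real y)))) (at (of_real y))"
      unfolding K_def[abs_def] using nz by (intro derivative_eq_intros) auto
    then have "(K has_field_derivative abel_kernel \<epsilon> y) (at (of_real y))"
      by (rule DERIV_cong) (use nz in \<open>simp add: abel_kernel_def field_simps power2_eq_square\<close>)
    then show ?thesis by (rule has_vector_derivative_real_field)
  qed
  then have "(abel_kernel \<epsilon> has_integral (K (of_real \<delta>) - K (of_real 0))) {0..\<delta>}"
    by (intro fundamental_theorem_of_calculus assms(2)) (auto intro: has_vector_derivative_at_within)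
  then show ?thesis using assms(1) by (simp add: integral_unique K_def divide_inverse)
qed

lemma integral_norm_abel_kernel:
  assumes "\<epsilon> > 0" "\<delta> \<ge> 0"
  shows "integral {0..\<delta>} (\<lambda>x. \<epsilon> / (\<epsilon>\<^sup>2 + x\<^sup>2)) = arctan (\<delta> / \<epsilon>)"
proof -
  have "((\<lambda>x. arctan (x / \<epsilon>)) has_real_derivative inverse (1 + (x / \<epsilon>)\<^sup>2) * (1 / \<epsilon>)) (at x)" for x
    using assms(1) by (auto intro!: derivative_eq_intros)
  moreover have "inverse (1 + (x / \<epsilon>)\<^sup>2) * (1 / \<epsilon>) = \<epsilon> / (\<epsilon>\<^sup>2 + x\<^sup>2)" for x
    using assms(1) by (simp add: field_simps power2_eq_square)
  ultimately have "((\<lambda>x. \<epsilon> / (\<epsilon>\<^sup>2 + x\<^sup>2)) has_integral (arctan (\<delta> / \<epsilon>) - arctan (0 / \<epsilon>))) {0..\<delta>}"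
    by (intro fundamental_theorem_of_calculus assms(2))
       (auto simp: has_real_derivative_iff_has_vector_derivative intro: has_vector_derivative_at_within)
  then show ?thesis by (simp add: integral_unique)
qed

lemma norm_set_integral_abel_kernel_near_0:
  fixes g :: "real \<Rightarrow> real"
  assumes "\<epsilon> > 0" "\<delta> > 0" "continuous_on {0..\<delta>} g"
    and osc: "\<And>x. x \<in> {0..\<delta>} \<Longrightarrow> \<bar>g x - g 0\<bar> \<le> \<eta>"
  shows "norm (LINT x:{0..\<delta>}|lborel. of_real (g x - g 0) * abel_kernel \<epsilon> x) \<le> 2 * \<eta>"
proof -
  have "\<eta> \<ge> 0" using osc[of 0] assms(2) by auto
  have I: "set_integrable lborel {0..\<delta>} (\<lambda>x. of_real (g x - g 0) * abel_kernel \<epsilon> x)"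
    by (intro borel_integrable_atLeastAtMost' continuous_intros continuous_on_abel_kernel assms(1,3))
  have J: "set_integrable lborel {0..\<delta>} (\<lambda>x. \<eta> * (\<epsilon> / (\<epsilon>\<^sup>2 + x\<^sup>2)))"
    by (intro borel_integrable_atLeastAtMost' continuous_intros) (use assms(1) in \<open>auto simp: add_pos_nonneg\<close>)
  have "norm (LINT x:{0..\<delta>}|lborel. of_real (g x - g 0) * abel_kernel \<epsilon> x)
      \<le> (LINT x:{0..\<delta>}|lborel. norm (of_real (g x - g 0) * abel_kernel \<epsilon> x))"
    by (rule set_integral_norm_bound[OF I])
  also have "\<dots> \<le> (LINT x:{0..\<delta>}|lborel. \<eta> * (\<epsilon> / (\<epsilon>\<^sup>2 + x\<^sup>2)))"
    using set_integrable_norm[OF I] J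
  proof (rule set_integral_mono)
    fix x assume "x \<in> {0..\<delta>}"
    have "norm (of_real (g x - g 0) * abel_kernel \<epsilon> x) = \<bar>g x - g 0\<bar> * (\<epsilon> / (\<epsilon>\<^sup>2 + x\<^sup>2))"
      by (simp only: norm_mult norm_of_real norm_abel_kernel[OF assms(1)])
    also have "\<dots> \<le> \<eta> * (\<epsilon> / (\<epsilon>\<^sup>2 + x\<^sup>2))"
      using osc[OF \<open>x \<in> {0..\<delta>}\<close>] assms(1) by (intro mult_right_mono) auto
    finally show "norm (of_real (g x - g 0) * abel_kernel \<epsilon> x) \<le> \<eta> * (\<epsilon> / (\<epsilon>\<^sup>2 + x\<^sup>2))" .
  qed
  also have "\<dots> = \<eta> * integral {0..\<delta>} (\<lambda>x. \<epsilon> / (\<epsilon>\<^sup>2 + x\<^sup>2))"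
    by (simp only: set_borel_integral_eq_integral(2)[OF J] Henstock_Kurzweil_Integration.integral_mult_right)
  also have "\<dots> = \<eta> * arctan (\<delta> / \<epsilon>)"
    using integral_norm_abel_kernel[OF assms(1), of \<delta>] assms(2) by simp
  also have "\<dots> \<le> \<eta> * 2"
    using arctan_ubound[of "\<delta> / \<epsilon>"] pi_less_4 \<open>\<eta> \<ge> 0\<close> by (intro mult_left_mono) auto
  finally show ?thesis by simp
qed

lemma set_integrable_mult_abel_kernel:
  fixes g :: "real \<Rightarrow> real"
  assumes "\<epsilon> > 0" "continuous_on {0..} g" "set_integrable lborel {0..} g"
  shows "set_integrable lborel {0..} (\<lambda>x. of_real (g x) * abel_kernel \<epsilon> x)"
proof (rule set_integrable_continuous_dominated[OF _ _ set_integrable_mult_right[OF assms(3), of "1 / \<epsilon>"]])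
  show "norm (of_real (g x) * abel_kernel \<epsilon> x) \<le> norm (1 / \<epsilon> * g x)" for x
    using mult_left_mono[OF norm_abel_kernel_le(1)[OF assms(1), of x], of "\<bar>g x\<bar>"] assms(1)
    by (simp add: norm_mult abs_mult mult.commute)
  show "continuous_on {0..} (\<lambda>x. of_real (g x) * abel_kernel \<epsilon> x)"
    by (intro continuous_intros continuous_on_abel_kernel assms(1,2))
qed simp

lemma norm_set_integral_abel_kernel_tail:
  fixes g :: "real \<Rightarrow> real"
  assumes "\<epsilon> > 0" "\<delta> > 0" "continuous_on {0..} g" "set_integrable lborel {0..} g"
  shows "norm (LINT x:{\<delta><..}|lborel. of_real (g x) * abel_kernel \<epsilon> x) \<le> \<epsilon> / \<delta>\<^sup>2 * (LINT x:{0..}|lborel. \<bar>g x\<bar>)"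
proof -
  have "{\<delta><..} \<subseteq> {0..}" using assms(2) by auto
  have I: "set_integrable lborel {\<delta><..} (\<lambda>x. of_real (g x) * abel_kernel \<epsilon> x)"
    using set_integrable_mult_abel_kernel[OF assms(1,3,4)] by (rule set_integrable_subset) (use assms(2) in auto)
  have abs_int: "set_integrable lborel {\<delta><..} (\<lambda>x. \<bar>g x\<bar>)"
    using set_integrable_abs[OF assms(4)] by (rule set_integrable_subset) (use assms(2) in auto)
  have bound: "norm (of_real (g x) * abel_kernel \<epsilon> x) \<le> \<epsilon> / \<delta>\<^sup>2 * \<bar>g x\<bar>" if "x \<in> {\<delta><..}" for x
  proof -
    have "\<delta> < x" using that by simp
    then have "\<delta>\<^sup>2 \<le> x\<^sup>2" "x \<noteq> 0" using assms(2) by (intro power_mono, simp_all)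
    have "\<epsilon> / x\<^sup>2 \<le> \<epsilon> / \<delta>\<^sup>2"
      using \<open>\<delta>\<^sup>2 \<le> x\<^sup>2\<close> assms(1,2) by (intro divide_left_mono mult_pos_pos) auto
    with norm_abel_kernel_le(2)[OF assms(1) \<open>x \<noteq> 0\<close>] have "norm (abel_kernel \<epsilon> x) \<le> \<epsilon> / \<delta>\<^sup>2"
      by (rule order_trans)
    then have "\<bar>g x\<bar> * norm (abel_kernel \<epsilon> x) \<le> \<bar>g x\<bar> * (\<epsilon> / \<delta>\<^sup>2)" by (rule mult_left_mono) simp
    then show ?thesis by (simp add: norm_mult mult.commute)
  qed
  have "norm (LINT x:{\<delta><..}|lborel. of_real (g x) * abel_kernel \<epsilon> x) \<le> (LINT x:{\<delta><..}|lborel. \<epsilon> / \<delta>\<^sup>2 * \<bar>g x\<bar>)"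
    using set_integral_norm_bound[OF I] set_integral_mono[OF set_integrable_norm[OF I] set_integrable_mult_right[OF abs_int] bound]
    by (rule order_trans)
  also have "\<dots> = \<epsilon> / \<delta>\<^sup>2 * (LINT x:{\<delta><..}|lborel. \<bar>g x\<bar>)" by (rule set_integral_mult_right)
  also have "\<dots> \<le> \<epsilon> / \<delta>\<^sup>2 * (LINT x:{0..}|lborel. \<bar>g x\<bar>)"
  proof (rule mult_left_mono)
    show "(LINT x:{\<delta><..}|lborel. \<bar>g x\<bar>) \<le> (LINT x:{0..}|lborel. \<bar>g x\<bar>)"
      unfolding set_lebesgue_integral_def
      using abs_int set_integrable_abs[OF assms(4)] \<open>{\<delta><..} \<subseteq> {0..}\<close>
      by (intro integral_mono) (auto simp: set_integrable_def split: split_indicator)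
  qed (use assms(1) in simp)
  finally show ?thesis .
qed

lemma set_integral_abel_kernel_Icc:
  fixes g :: "real \<Rightarrow> real"
  assumes \<epsilon>: "\<epsilon> > 0" and \<delta>: "\<delta> \<ge> 0" and cont: "continuous_on {0..\<delta>} g"
  shows "(LINT x:{0..\<delta>}|lborel. of_real (g x) * abel_kernel \<epsilon> x)
    = (LINT x:{0..\<delta>}|lborel. of_real (g x - g 0) * abel_kernel \<epsilon> x)
      + of_real (g 0) * (\<i> - \<i> * of_real \<epsilon> / (of_real \<epsilon> - \<i> * of_real \<delta>))"
proof -
  have K: "set_integrable lborel {0..\<delta>} (abel_kernel \<epsilon>)"
    by (intro borel_integrable_atLeastAtMost' continuous_on_abel_kernel \<epsilon>)
  have G: "set_integrable lborel {0..\<delta>} (\<lambda>x. of_real (g x - g 0) * abel_kernel \<epsilon> x)"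
    by (intro borel_integrable_atLeastAtMost' continuous_intros continuous_on_abel_kernel \<epsilon> cont)
  have "(LINT x:{0..\<delta>}|lborel. of_real (g x) * abel_kernel \<epsilon> x)
      = (LINT x:{0..\<delta>}|lborel. of_real (g x - g 0) * abel_kernel \<epsilon> x + of_real (g 0) * abel_kernel \<epsilon> x)"
    by (rule set_lebesgue_integral_cong) (auto simp: algebra_simps)
  also have "\<dots> = (LINT x:{0..\<delta>}|lborel. of_real (g x - g 0) * abel_kernel \<epsilon> x)
      + of_real (g 0) * (LINT x:{0..\<delta>}|lborel. abel_kernel \<epsilon> x)"
    by (simp only: set_integral_add(2)[OF G set_integrable_mult_right[OF K]] set_integral_mult_right)
  also have "(LINT x:{0..\<delta>}|lborel. abel_kernel \<epsilon> x) = \<i> - \<i> * of_real \<epsilon> / (of_real \<epsilon> - \<i> * of_real \<delta>)"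
    using set_borel_integral_eq_integral(2)[OF K] integral_abel_kernel[OF \<epsilon> \<delta>] by simp
  finally show ?thesis .
qed

lemma norm_set_integral_abel_kernel_sub_le:
  fixes g :: "real \<Rightarrow> real"
  assumes \<epsilon>: "\<epsilon> > 0" and \<delta>: "\<delta> > 0" and cont: "continuous_on {0..} g" and int: "set_integrable lborel {0..} g"
    and osc: "\<And>x. x \<in> {0..\<delta>} \<Longrightarrow> \<bar>g x - g 0\<bar> \<le> \<eta>"
  shows "norm ((LINT x:{0..}|lborel. of_real (g x) * abel_kernel \<epsilon> x) - \<i> * of_real (g 0))
    \<le> 2 * \<eta> + \<epsilon> * (\<bar>g 0\<bar> / \<delta> + (LINT x:{0..}|lborel. \<bar>g x\<bar>) / \<delta>\<^sup>2)"
proof -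
  let ?F = "\<lambda>x. of_real (g x) * abel_kernel \<epsilon> x"
  let ?A = "LINT x:{0..\<delta>}|lborel. of_real (g x - g 0) * abel_kernel \<epsilon> x"
  let ?B = "LINT x:{\<delta><..}|lborel. ?F x"
  define w where "w = \<i> * of_real \<epsilon> / (of_real \<epsilon> - \<i> * of_real \<delta>)"
  have cont_\<delta>: "continuous_on {0..\<delta>} g" using cont by (rule continuous_on_subset) auto
  have "(LINT x:{0..\<delta>} \<union> {\<delta><..}|lborel. ?F x) = (LINT x:{0..\<delta>}|lborel. ?F x) + ?B"
  proof (rule set_integral_Un)
    show "set_integrable lborel {0..\<delta>} ?F" "set_integrable lborel {\<delta><..} ?F"
      by (rule set_integrable_subset[OF set_integrable_mult_abel_kernel[OF \<epsilon> cont int]]; use \<delta> in auto)+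
  qed auto
  moreover have "{0..\<delta>} \<union> {\<delta><..} = {0..}" using \<delta> by auto
  moreover note set_integral_abel_kernel_Icc[OF \<epsilon> less_imp_le[OF \<delta>] cont_\<delta>, folded w_def]
  moreover have "a + c * (\<i> - w) + b - \<i> * c = a - c * w + b" for a b c :: complex
    by (simp add: algebra_simps)
  ultimately have "(LINT x:{0..}|lborel. ?F x) - \<i> * of_real (g 0) = ?A - of_real (g 0) * w + ?B"
    by (simp only:)
  also have "norm \<dots> \<le> norm ?A + norm (of_real (g 0) * w) + norm ?B"
    by (rule order_trans[OF norm_triangle_ineq add_right_mono[OF norm_triangle_ineq4]])
  also have "\<dots> \<le> 2 * \<eta> + \<bar>g 0\<bar> * (\<epsilon> / \<delta>) + \<epsilon> / \<delta>\<^sup>2 * (LINT x:{0..}|lborel. \<bar>g x\<bar>)"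
  proof (intro add_mono)
    show "norm ?A \<le> 2 * \<eta>" by (rule norm_set_integral_abel_kernel_near_0[OF \<epsilon> \<delta> cont_\<delta> osc])
    have "\<delta> \<le> norm (of_real \<epsilon> - \<i> * of_real \<delta> :: complex)"
      using abs_Im_le_cmod[of "of_real \<epsilon> - \<i> * of_real \<delta>"] \<delta> by simp
    then have "norm w \<le> \<epsilon> / \<delta>" using \<epsilon> \<delta> unfolding w_def by (simp add: norm_divide norm_mult frac_le)
    then show "norm (of_real (g 0) * w) \<le> \<bar>g 0\<bar> * (\<epsilon> / \<delta>)"
      unfolding norm_mult norm_of_real by (rule mult_left_mono) simp
    show "norm ?B \<le> \<epsilon> / \<delta>\<^sup>2 * (LINT x:{0..}|lborel. \<bar>g x\<bar>)"
      by (rule norm_set_integral_abel_kernel_tail[OF \<epsilon> \<delta> cont int])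
  qed
  also have "\<dots> = 2 * \<eta> + \<epsilon> * (\<bar>g 0\<bar> / \<delta> + (LINT x:{0..}|lborel. \<bar>g x\<bar>) / \<delta>\<^sup>2)"
    by (simp add: algebra_simps)
  finally show ?thesis .
qed

lemma integrable_product_mult_cis:
  fixes c h :: "real \<Rightarrow> real"
  assumes [measurable]: "c \<in> borel_measurable borel" "h \<in> borel_measurable borel"
    and "integrable lborel c" "integrable lborel h"
  shows "integrable (lborel \<Otimes>\<^sub>M lborel) (\<lambda>(t, x). complex_of_real (c t) * (of_real (h x) * cis (t * x)))"
proof (rule lborel_pair.Fubini_integrable)
  show "(\<lambda>(t, x). complex_of_real (c t) * (of_real (h x) * cis (t * x))) \<in> borel_measurable (lborel \<Otimes>\<^sub>M lborel)"
    unfolding cis_conv_exp by measurable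
  have "(\<integral>x. norm (complex_of_real (c t) * (of_real (h x) * cis (t * x))) \<partial>lborel) = \<bar>c t\<bar> * (\<integral>x. \<bar>h x\<bar> \<partial>lborel)" for t
    by (simp add: norm_mult)
  then show "integrable lborel (\<lambda>t. \<integral>x. norm (case_prod (\<lambda>t x. complex_of_real (c t) * (of_real (h x) * cis (t * x))) (t, x)) \<partial>lborel)"
    using integrable_mult_left[OF integrable_abs[OF assms(3)]] by simp
  have "integrable lborel (\<lambda>x. of_real (h x) * cis (t * x) :: complex)" for t
  proof (rule Bochner_Integration.integrable_bound[OF integrable_of_real[OF assms(4), where 'a=complex]])
    show "(\<lambda>x. of_real (h x) * cis (t * x) :: complex) \<in> borel_measurable lborel"
      unfolding cis_conv_exp by measurable
  qed (simp add: norm_mult)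
  then show "AE t in lborel. integrable lborel (\<lambda>x. case_prod (\<lambda>t x. complex_of_real (c t) * (of_real (h x) * cis (t * x))) (t, x))"
    by (simp add: integrable_mult_right)
qed

lemma set_integral_mult_fourier_Ici:
  fixes g w :: "real \<Rightarrow> real"
  assumes cont: "continuous_on {0..} g" "continuous_on {0..} w"
    and int: "set_integrable lborel {0..} g" "set_integrable lborel {0..} w"
  shows "set_integrable lborel {0..} (\<lambda>t. of_real (w t) * fourier_Ici g t)"
    and "(LINT t:{0..}|lborel. of_real (w t) * fourier_Ici g t)
       = (LINT x:{0..}|lborel. of_real (g x) * (LINT t:{0..}|lborel. of_real (w t) * cis (t * x)))"
proof -
  define h where "h x = indicator {0..} x *\<^sub>R g x" for x :: real
  have h_meas[measurable]: "h \<in> borel_measurable borel"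
    unfolding h_def[abs_def] by (rule borel_measurable_continuous_on_indicator[OF _ cont(1)]) auto
  define c where "c t = indicator {0..} t *\<^sub>R w t" for t :: real
  have c_meas[measurable]: "c \<in> borel_measurable borel"
    unfolding c_def[abs_def] by (rule borel_measurable_continuous_on_indicator[OF _ cont(2)]) auto
  define f where "f t x = complex_of_real (c t) * (of_real (h x) * cis (t * x))" for t x
  have fourier_eq: "fourier_Ici g t = (\<integral>x. of_real (h x) * cis (t * x) \<partial>lborel)" for t
    unfolding fourier_Ici_def set_lebesgue_integral_def
    by (intro Bochner_Integration.integral_cong) (auto simp: h_def split: split_indicator)
  have "integrable lborel c" using int(2) unfolding set_integrable_def c_def .
  moreover have "integrable lborel h" using int(1) unfolding set_integrable_def h_def .
  ultimately have f_int: "integrable (lborel \<Otimes>\<^sub>M lborel) (case_prod f)"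
    unfolding f_def[abs_def] by (rule integrable_product_mult_cis[OF c_meas h_meas])
  have inner_x: "(\<integral>x. f t x \<partial>lborel) = of_real (c t) * fourier_Ici g t" for t
    unfolding f_def fourier_eq by simp
  have inner_t: "(\<integral>t. f t x \<partial>lborel)
      = indicator {0..} x *\<^sub>R (of_real (g x) * (LINT t:{0..}|lborel. of_real (w t) * cis (t * x)))" for x
  proof -
    have "(\<integral>t. f t x \<partial>lborel) = of_real (h x) * (\<integral>t. of_real (c t) * cis (t * x) \<partial>lborel)"
      unfolding f_def by (simp add: mult_ac flip: Bochner_Integration.integral_mult_right_zero)
    moreover have "(LINT t:{0..}|lborel. of_real (w t) * cis (t * x)) = (\<integral>t. of_real (c t) * cis (t * x) \<partial>lborel)"
      unfolding set_lebesgue_integral_def c_def by (simp add: scaleR_conv_of_real mult.assoc)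
    ultimately show ?thesis by (simp add: h_def split: split_indicator)
  qed
  show "set_integrable lborel {0..} (\<lambda>t. of_real (w t) * fourier_Ici g t)"
    using lborel_pair.integrable_fst[OF f_int]
    unfolding set_integrable_def inner_x c_def by (simp add: scaleR_conv_of_real mult.assoc)
  show "(LINT t:{0..}|lborel. of_real (w t) * fourier_Ici g t)
      = (LINT x:{0..}|lborel. of_real (g x) * (LINT t:{0..}|lborel. of_real (w t) * cis (t * x)))"
    using lborel_pair.Fubini_integral[OF f_int]
    unfolding inner_x inner_t set_lebesgue_integral_def c_def by (simp add: scaleR_conv_of_real mult.assoc)
qed

lemma set_integral_times_exp_fourier_Ici:
  fixes g :: "real \<Rightarrow> real"
  assumes \<epsilon>: "\<epsilon> > 0" and cont: "continuous_on {0..} g" and int: "set_integrable lborel {0..} g"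
  shows "set_integrable lborel {0..} (\<lambda>t. of_real (\<epsilon> * t * exp (-(\<epsilon> * t))) * fourier_Ici g t)"
    and "(LINT t:{0..}|lborel. of_real (\<epsilon> * t * exp (-(\<epsilon> * t))) * fourier_Ici g t)
       = (LINT x:{0..}|lborel. of_real (g x) * abel_kernel \<epsilon> x)"
proof -
  have w_cont: "continuous_on {0..} (\<lambda>t. \<epsilon> * t * exp (-(\<epsilon> * t)))" by (intro continuous_intros)
  have w_int: "set_integrable lborel {0..} (\<lambda>t. \<epsilon> * t * exp (-(\<epsilon> * t)))"
    using set_integrable_mult_right[OF set_integrable_times_exp_Ici[OF \<epsilon>], of \<epsilon>] by (simp add: mult.assoc)
  have "(LINT t:{0..}|lborel. of_real (\<epsilon> * t * exp (-(\<epsilon> * t))) * cis (t * x))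
      = of_real \<epsilon> * (LINT t:{0..}|lborel. of_real (t * exp (-(\<epsilon> * t))) * cis (t * x))" for x
    by (simp add: mult.assoc flip: set_integral_mult_right)
  then have inner: "(LINT t:{0..}|lborel. of_real (\<epsilon> * t * exp (-(\<epsilon> * t))) * cis (t * x)) = abel_kernel \<epsilon> x" for x
    using set_integral_times_exp_cis_Ici[OF \<epsilon>, of x] by (simp add: abel_kernel_def)
  show "set_integrable lborel {0..} (\<lambda>t. of_real (\<epsilon> * t * exp (-(\<epsilon> * t))) * fourier_Ici g t)"
    by (rule set_integral_mult_fourier_Ici(1)[OF cont w_cont int w_int])
  show "(LINT t:{0..}|lborel. of_real (\<epsilon> * t * exp (-(\<epsilon> * t))) * fourier_Ici g t)
       = (LINT x:{0..}|lborel. of_real (g x) * abel_kernel \<epsilon> x)"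
    unfolding set_integral_mult_fourier_Ici(2)[OF cont w_cont int w_int] inner ..
qed

definition abel_mean :: "real \<Rightarrow> (real \<Rightarrow> complex) \<Rightarrow> complex" where
  "abel_mean \<epsilon> \<Psi> = (LINT t:{0..}|lborel. of_real (\<epsilon> * exp (-(\<epsilon> * t))) * \<Psi> t)"

lemma set_integral_complex_exp_Ici:
  fixes \<epsilon> :: real
  assumes "\<epsilon> > 0"
  shows "set_integrable lborel {0..} (\<lambda>t. complex_of_real (\<epsilon> * exp (-(\<epsilon> * t))))"
    and "(LINT t:{0..}|lborel. complex_of_real (\<epsilon> * exp (-(\<epsilon> * t)))) = 1"
proof -
  have I: "set_integrable lborel {0..} (\<lambda>t. \<epsilon> * exp (-(\<epsilon> * t)))"
    using set_integrable_exp_Ici[OF assms] by (rule set_integrable_mult_right)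
  show "set_integrable lborel {0..} (\<lambda>t. complex_of_real (\<epsilon> * exp (-(\<epsilon> * t))))"
    using integrable_of_real[OF I[unfolded set_integrable_def]]
    by (simp add: set_integrable_def scaleR_conv_of_real)
  show "(LINT t:{0..}|lborel. complex_of_real (\<epsilon> * exp (-(\<epsilon> * t)))) = 1"
    by (simp only: set_integral_complex_of_real set_integral_exp_Ici[OF assms]) simp
qed

lemma set_integral_indicator_Icc:
  fixes T c :: real
  assumes "T \<ge> 0"
  shows "set_integrable lborel {0..} (\<lambda>t. indicator {0..T} t * c)"
    and "(LINT t:{0..}|lborel. indicator {0..T} t * c) = T * c"
proof -
  have eq: "indicator {0..} t *\<^sub>R (indicator {0..T} t * c) = indicator {0..T} t *\<^sub>R c" for t :: real
    by (simp split: split_indicator)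
  have I: "set_integrable lborel {0..T} (\<lambda>t. c)" by (rule borel_integrable_atLeastAtMost') simp
  then show "set_integrable lborel {0..} (\<lambda>t. indicator {0..T} t * c)"
    unfolding set_integrable_def eq .
  have "(LINT t:{0..}|lborel. indicator {0..T} t * c) = (LINT t:{0..T}|lborel. c)"
    unfolding set_lebesgue_integral_def eq ..
  also have "\<dots> = integral {0..T} (\<lambda>t. c)" by (rule set_borel_integral_eq_integral(2)[OF I])
  also have "\<dots> = T * c" using assms by simp
  finally show "(LINT t:{0..}|lborel. indicator {0..T} t * c) = T * c" .
qed

lemma norm_abel_mean_sub_le:
  fixes \<Psi> :: "real \<Rightarrow> complex"
  assumes \<epsilon>: "\<epsilon> > 0" and T: "T \<ge> 0"
    and int: "set_integrable lborel {0..} (\<lambda>t. of_real (\<epsilon> * exp (-(\<epsilon> * t))) * \<Psi> t)"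
    and far: "\<And>t. t \<ge> T \<Longrightarrow> norm (\<Psi> t - L) \<le> \<eta>"
    and near: "\<And>t. t \<in> {0..T} \<Longrightarrow> norm (\<Psi> t - L) \<le> C"
  shows "norm (abel_mean \<epsilon> \<Psi> - L) \<le> \<eta> + \<epsilon> * T * C"
proof -
  define E where "E t = \<epsilon> * exp (-(\<epsilon> * t))" for t
  note E1 = set_integral_complex_exp_Ici[OF \<epsilon>, folded E_def]
  note box = set_integral_indicator_Icc[OF T, of "\<epsilon> * C"]
  have "C \<ge> 0" using near[of T] T by (auto intro: order_trans[OF norm_ge_zero])
  have E_int: "set_integrable lborel {0..} E"
    unfolding E_def by (rule set_integrable_mult_right[OF set_integrable_exp_Ici[OF \<epsilon>]])
  have D: "set_integrable lborel {0..} (\<lambda>t. of_real (E t) * \<Psi> t - of_real (E t) * L)"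
    using int set_integrable_mult_left[OF E1(1)] unfolding E_def by (rule set_integral_diff(1))
  have "abel_mean \<epsilon> \<Psi> - L = (LINT t:{0..}|lborel. of_real (E t) * \<Psi> t - of_real (E t) * L)"
    using set_integral_diff(2)[OF int[folded E_def] set_integrable_mult_left[OF E1(1)]] E1(2)
    by (simp add: abel_mean_def E_def set_integral_mult_left)
  also have "norm \<dots> \<le> (LINT t:{0..}|lborel. norm (of_real (E t) * \<Psi> t - of_real (E t) * L))"
    by (rule set_integral_norm_bound[OF D])
  also have "\<dots> \<le> (LINT t:{0..}|lborel. \<eta> * E t + indicator {0..T} t * (\<epsilon> * C))"
  proof (rule set_integral_mono[OF set_integrable_norm[OF D] set_integral_add(1)[OF set_integrable_mult_right[OF E_int] box(1)]])
    fix t :: real assume "t \<in> {0..}"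
    have "0 \<le> E t" "E t \<le> \<epsilon>" using \<open>t \<in> {0..}\<close> \<epsilon> by (auto simp: E_def)
    have "norm (of_real (E t) * \<Psi> t - of_real (E t) * L) = E t * norm (\<Psi> t - L)"
      using \<open>0 \<le> E t\<close> by (simp add: norm_mult flip: right_diff_distrib)
    also have "\<dots> \<le> \<eta> * E t + indicator {0..T} t * (\<epsilon> * C)"
    proof (cases "t \<ge> T")
      case True
      have "E t * norm (\<Psi> t - L) \<le> \<eta> * E t"
        using mult_left_mono[OF far[OF True] \<open>0 \<le> E t\<close>] by (simp add: mult.commute)
      moreover have "0 \<le> indicator {0..T} t * (\<epsilon> * C)" using \<open>C \<ge> 0\<close> \<epsilon> by simp
      ultimately show ?thesis by linarith
    next
      case False
      then have "t \<in> {0..T}" "\<eta> \<ge> 0" using \<open>t \<in> {0..}\<close> far[of T] by (auto intro: order_trans[OF norm_ge_zero])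
      then show ?thesis using near[of t] \<open>0 \<le> E t\<close> \<open>E t \<le> \<epsilon>\<close> \<open>C \<ge> 0\<close>
        by (simp add: mult_mono add_increasing)
    qed
    finally show "norm (of_real (E t) * \<Psi> t - of_real (E t) * L) \<le> \<eta> * E t + indicator {0..T} t * (\<epsilon> * C)" .
  qed
  also have "\<dots> = \<eta> + \<epsilon> * T * C"
    using set_integral_add(2)[OF set_integrable_mult_right[OF E_int] box(1)] box(2)
      set_integral_exp_Ici[OF \<epsilon>] by (simp add: E_def)
  finally show ?thesis .
qed

lemma abel_mean_tendsto:
  fixes \<Psi> :: "real \<Rightarrow> complex"
  assumes lim: "(\<Psi> \<longlongrightarrow> L) at_top"
    and int: "\<And>\<epsilon>. \<epsilon> > 0 \<Longrightarrow> set_integrable lborel {0..} (\<lambda>t. of_real (\<epsilon> * exp (-(\<epsilon> * t))) * \<Psi> t)"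
    and bounded: "\<And>T. \<exists>C. \<forall>t\<in>{0..T}. norm (\<Psi> t) \<le> C"
  shows "((\<lambda>\<epsilon>. abel_mean \<epsilon> \<Psi>) \<longlongrightarrow> L) (at_right 0)"
proof (rule tendstoI)
  fix e :: real assume "e > 0"
  then obtain T0 where "\<And>t. t \<ge> T0 \<Longrightarrow> dist (\<Psi> t) L < e / 2"
    using tendstoD[OF lim, of "e / 2"] unfolding eventually_at_top_linorder by auto
  then obtain T where "T \<ge> 0" and far: "\<And>t. t \<ge> T \<Longrightarrow> norm (\<Psi> t - L) \<le> e / 2"
    by (metis dist_norm less_imp_le max.cobounded1 max.cobounded2 order_trans)
  obtain C0 where C0: "\<And>t. t \<in> {0..T} \<Longrightarrow> norm (\<Psi> t) \<le> C0" using bounded by blast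
  define C where "C = C0 + norm L"
  have near: "norm (\<Psi> t - L) \<le> C" if "t \<in> {0..T}" for t
    using norm_triangle_ineq4[of "\<Psi> t" L] C0[OF that] by (simp add: C_def)
  have "C \<ge> 0" using near[of T] \<open>T \<ge> 0\<close> by (auto intro: order_trans[OF norm_ge_zero])
  show "\<forall>\<^sub>F \<epsilon> in at_right 0. dist (abel_mean \<epsilon> \<Psi>) L < e"
    unfolding eventually_at_right_field
  proof (intro exI[of _ "e / (2 * (T * C + 1))"] conjI allI impI)
    show "0 < e / (2 * (T * C + 1))" using \<open>e > 0\<close> \<open>T \<ge> 0\<close> \<open>C \<ge> 0\<close> by (simp add: add_nonneg_pos)
    fix \<epsilon> :: real assume "0 < \<epsilon>" and \<epsilon>: "\<epsilon> < e / (2 * (T * C + 1))"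
    have "0 < 2 * (T * C + 1)" using \<open>T \<ge> 0\<close> \<open>C \<ge> 0\<close> by (simp add: add_nonneg_pos)
    with \<epsilon> have "\<epsilon> * (2 * (T * C + 1)) < e" by (simp only: pos_less_divide_eq)
    then have "\<epsilon> * (T * C + 1) < e / 2" by (simp add: algebra_simps)
    moreover have "dist (abel_mean \<epsilon> \<Psi>) L \<le> e / 2 + \<epsilon> * T * C"
      unfolding dist_norm by (rule norm_abel_mean_sub_le[OF \<open>0 < \<epsilon>\<close> \<open>T \<ge> 0\<close> int[OF \<open>0 < \<epsilon>\<close>] far near])
    ultimately show "dist (abel_mean \<epsilon> \<Psi>) L < e" using \<open>0 < \<epsilon>\<close> by (simp add: algebra_simps)
  qed
qed

lemma set_integral_abel_kernel_tendsto:
  fixes g :: "real \<Rightarrow> real"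
  assumes cont: "continuous_on {0..} g" and int: "set_integrable lborel {0..} g"
  shows "((\<lambda>\<epsilon>. LINT x:{0..}|lborel. of_real (g x) * abel_kernel \<epsilon> x) \<longlongrightarrow> \<i> * of_real (g 0)) (at_right 0)"
proof (rule tendstoI)
  fix e :: real assume "e > 0"
  then obtain \<delta> where "\<delta> > 0" and "\<And>x. x \<in> {0..} \<Longrightarrow> dist x 0 < \<delta> \<Longrightarrow> dist (g x) (g 0) < e / 3"
    using cont unfolding continuous_on_iff by (metis atLeast_iff order_refl divide_pos_pos zero_less_numeral)
  then have osc: "\<bar>g x - g 0\<bar> \<le> e / 3" if "x \<in> {0..\<delta> / 2}" for x
    using that by (fastforce simp: dist_real_def)
  define K where "K = \<bar>g 0\<bar> / (\<delta> / 2) + (LINT x:{0..}|lborel. \<bar>g x\<bar>) / (\<delta> / 2)\<^sup>2"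
  have "0 \<le> (LINT x:{0..}|lborel. \<bar>g x\<bar>)"
    unfolding set_lebesgue_integral_def by (intro Bochner_Integration.integral_nonneg) simp
  then have "K \<ge> 0" using \<open>\<delta> > 0\<close> by (simp add: K_def)
  show "\<forall>\<^sub>F \<epsilon> in at_right 0. dist (LINT x:{0..}|lborel. of_real (g x) * abel_kernel \<epsilon> x) (\<i> * of_real (g 0)) < e"
    unfolding eventually_at_right_field
  proof (intro exI[of _ "e / (3 * (K + 1))"] conjI allI impI)
    show "0 < e / (3 * (K + 1))" using \<open>e > 0\<close> \<open>K \<ge> 0\<close> by (simp add: add_nonneg_pos)
    fix \<epsilon> :: real assume "0 < \<epsilon>" and \<epsilon>: "\<epsilon> < e / (3 * (K + 1))"
    have "0 < 3 * (K + 1)" using \<open>K \<ge> 0\<close> by simp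
    with \<epsilon> have "\<epsilon> * (3 * (K + 1)) < e" by (simp only: pos_less_divide_eq)
    then have "\<epsilon> * (K + 1) < e / 3" by (simp add: algebra_simps)
    moreover have "dist (LINT x:{0..}|lborel. of_real (g x) * abel_kernel \<epsilon> x) (\<i> * of_real (g 0)) \<le> 2 * (e / 3) + \<epsilon> * K"
      unfolding dist_norm K_def using \<open>\<delta> > 0\<close>
      by (intro norm_set_integral_abel_kernel_sub_le \<open>0 < \<epsilon>\<close> cont int osc) auto
    ultimately show "dist (LINT x:{0..}|lborel. of_real (g x) * abel_kernel \<epsilon> x) (\<i> * of_real (g 0)) < e"
      using \<open>0 < \<epsilon>\<close> by (simp add: algebra_simps)
  qed
qed

lemma abel_mean_fourier_Ici:
  fixes g :: "real \<Rightarrow> real"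
  assumes \<epsilon>: "\<epsilon> > 0" and cont: "continuous_on {0..} g" and int: "set_integrable lborel {0..} g"
  shows "set_integrable lborel {0..}
      (\<lambda>t. of_real (\<epsilon> * exp (-(\<epsilon> * t))) * (- of_real (g 0) - \<i> * of_real t * fourier_Ici g t))"
    and "abel_mean \<epsilon> (\<lambda>t. - of_real (g 0) - \<i> * of_real t * fourier_Ici g t)
       = - of_real (g 0) - \<i> * (LINT x:{0..}|lborel. of_real (g x) * abel_kernel \<epsilon> x)"
proof -
  note E = set_integral_complex_exp_Ici[OF \<epsilon>] and Q = set_integral_times_exp_fourier_Ici[OF \<epsilon> cont int]
  have split: "of_real (\<epsilon> * exp (-(\<epsilon> * t))) * (- of_real (g 0) - \<i> * of_real t * fourier_Ici g t)
      = - of_real (g 0) * of_real (\<epsilon> * exp (-(\<epsilon> * t))) + - \<i> * (of_real (\<epsilon> * t * exp (-(\<epsilon> * t))) * fourier_Ici g t)" for t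
    by (simp add: algebra_simps)
  note I1 = set_integrable_mult_right[OF E(1), of "- of_real (g 0)"]
  note I2 = set_integrable_mult_right[OF Q(1), of "- \<i>"]
  show "set_integrable lborel {0..}
      (\<lambda>t. of_real (\<epsilon> * exp (-(\<epsilon> * t))) * (- of_real (g 0) - \<i> * of_real t * fourier_Ici g t))"
    unfolding split by (rule set_integral_add(1)[OF I1 I2])
  show "abel_mean \<epsilon> (\<lambda>t. - of_real (g 0) - \<i> * of_real t * fourier_Ici g t)
       = - of_real (g 0) - \<i> * (LINT x:{0..}|lborel. of_real (g x) * abel_kernel \<epsilon> x)"
    unfolding abel_mean_def split set_integral_add(2)[OF I1 I2] set_integral_mult_right E(2) Q(2) by simp
qed

text \<open>The Abel means of \<Psi>(t) = -g(0) - i t \<integral>_0^\<infinity> g(x) exp(itx) dx tend both to its limit and to 0.\<close>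
lemma fourier_Ici_abel_limit_eq_0:
  fixes g :: "real \<Rightarrow> real"
  assumes cont: "continuous_on {0..} g" and int: "set_integrable lborel {0..} g"
    and lim: "((\<lambda>t. - of_real (g 0) - \<i> * of_real t * fourier_Ici g t) \<longlongrightarrow> L) at_top"
  shows "L = 0"
proof -
  define \<Psi> where "\<Psi> t = - of_real (g 0) - \<i> * of_real t * fourier_Ici g t" for t
  have bounded: "\<exists>C. \<forall>t\<in>{0..T}. norm (\<Psi> t) \<le> C" for T
  proof (intro exI ballI)
    fix t assume t: "t \<in> {0..T}"
    have "norm (\<Psi> t) \<le> \<bar>g 0\<bar> + t * norm (fourier_Ici g t)"
      using t norm_triangle_ineq4[of "- of_real (g 0)" "\<i> * of_real t * fourier_Ici g t"]
      by (simp add: \<Psi>_def norm_mult)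
    also have "\<dots> \<le> \<bar>g 0\<bar> + T * (LINT x:{0..}|lborel. \<bar>g x\<bar>)"
      using t norm_fourier_Ici_le[OF cont int, of t] by (auto intro!: mult_mono)
    finally show "norm (\<Psi> t) \<le> \<bar>g 0\<bar> + T * (LINT x:{0..}|lborel. \<bar>g x\<bar>)" .
  qed
  have "((\<lambda>\<epsilon>. abel_mean \<epsilon> \<Psi>) \<longlongrightarrow> L) (at_right 0)"
    using lim abel_mean_fourier_Ici(1)[OF _ cont int] bounded
    unfolding \<Psi>_def[abs_def] by (intro abel_mean_tendsto) auto
  moreover have "((\<lambda>\<epsilon>. abel_mean \<epsilon> \<Psi>) \<longlongrightarrow> - of_real (g 0) - \<i> * (\<i> * of_real (g 0))) (at_right 0)"
  proof (rule Lim_transform_eventually)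
    show "((\<lambda>\<epsilon>. - of_real (g 0) - \<i> * (LINT x:{0..}|lborel. of_real (g x) * abel_kernel \<epsilon> x))
        \<longlongrightarrow> - of_real (g 0) - \<i> * (\<i> * of_real (g 0))) (at_right 0)"
      by (intro tendsto_intros set_integral_abel_kernel_tendsto cont int)
    show "\<forall>\<^sub>F \<epsilon> in at_right 0. - of_real (g 0) - \<i> * (LINT x:{0..}|lborel. of_real (g x) * abel_kernel \<epsilon> x)
        = abel_mean \<epsilon> \<Psi>"
      using eventually_at_right_less
      by (rule eventually_mono) (simp add: \<Psi>_def[abs_def] abel_mean_fourier_Ici(2)[OF _ cont int])
  qed
  ultimately show "L = 0" by (auto dest: tendsto_unique[rotated])
qed

corollary RS_integral_0_inf_cis_limit_eq_0:
  assumes "continuous_on {0..} g" "(g \<longlongrightarrow> 0) at_top" "set_integrable lborel {0..} g"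
    and "((\<lambda>t. RS_integral_0_inf (\<lambda>x. cis (t * x)) g) \<longlongrightarrow> L) at_top"
  shows "L = 0"
proof -
  have "(\<lambda>t. RS_integral_0_inf (\<lambda>x. cis (t * x)) g) = (\<lambda>t. - of_real (g 0) - \<i> * of_real t * fourier_Ici g t)"
    by (intro ext RS_integral_0_inf_cis assms(1-3))
  with assms(4) show ?thesis by (intro fourier_Ici_abel_limit_eq_0[OF assms(1,3)]) simp
qed

section \<open>Fourier--Stieltjes transforms of \<open>\<phi>\<close>\<close>

lemma set_integrable_power_mult_Ici:
  fixes \<phi> :: "real \<Rightarrow> real"
  assumes cont: "continuous_on {0..} \<phi>" and int: "set_integrable lborel {0<..} (\<lambda>x. x ^ n * \<phi> x)" and "j \<le> n"
  shows "set_integrable lborel {0..} (\<lambda>x. x ^ j * \<phi> x)"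
proof -
  have "set_integrable lborel {0..1} (\<lambda>x. x ^ j * \<phi> x)"
    by (intro borel_integrable_atLeastAtMost' continuous_intros continuous_on_subset[OF cont]) auto
  moreover have "set_integrable lborel {1..} (\<lambda>x. x ^ j * \<phi> x)"
  proof (rule set_integrable_continuous_dominated)
    show "set_integrable lborel {1..} (\<lambda>x. x ^ n * \<phi> x)"
      by (rule set_integrable_subset[OF int]) auto
    show "norm (x ^ j * \<phi> x) \<le> norm (x ^ n * \<phi> x)" if "x \<in> {1..}" for x
    proof -
      have "x ^ j \<le> x ^ n" using that \<open>j \<le> n\<close> by (intro power_increasing) auto
      then show ?thesis using that by (simp add: abs_mult mult_right_mono)
    qed
    show "continuous_on {1..} (\<lambda>x. x ^ j * \<phi> x)"
      by (intro continuous_intros continuous_on_subset[OF cont]) auto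
  qed simp
  ultimately have "set_integrable lborel ({0..1} \<union> {1..}) (\<lambda>x. x ^ j * \<phi> x)"
    by (rule set_integrable_Un) auto
  moreover have "{0..1} \<union> {1..} = {0::real..}" by auto
  ultimately show ?thesis by simp
qed

lemma power_mult_tendsto_0:
  fixes \<phi> :: "real \<Rightarrow> real"
  assumes "\<phi> \<in> o[at_top](\<lambda>x. 1 / x ^ n)" "j \<le> n"
  shows "((\<lambda>x. x ^ j * \<phi> x) \<longlongrightarrow> 0) at_top"
proof (rule Lim_null_comparison)
  show "\<forall>\<^sub>F x in at_top. norm (x ^ j * \<phi> x) \<le> \<bar>x ^ n * \<phi> x\<bar>"
    using eventually_ge_at_top[of 1]
  proof eventually_elim
    case (elim x)
    have "x ^ j \<le> x ^ n" using elim \<open>j \<le> n\<close> by (intro power_increasing) auto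
    then show ?case using elim by (simp add: abs_mult mult_right_mono)
  qed
  have "((\<lambda>x. \<phi> x / (1 / x ^ n)) \<longlongrightarrow> 0) at_top" by (rule smalloD_tendsto[OF assms(1)])
  then show "((\<lambda>x. \<bar>x ^ n * \<phi> x\<bar>) \<longlongrightarrow> 0) at_top"
    by (intro tendsto_rabs_zero) (simp add: mult.commute)
qed

lemma RS_integral_0_inf_power_cis_eq:
  fixes \<phi> :: "real \<Rightarrow> real"
  assumes cont: "continuous_on {0..} \<phi>"
    and lim: "((\<lambda>x. x ^ k * \<phi> x) \<longlongrightarrow> 0) at_top"
    and int: "set_integrable lborel {0..} (\<lambda>x. x ^ (k - 1) * \<phi> x)" "set_integrable lborel {0..} (\<lambda>x. x ^ k * \<phi> x)"
  shows "RS_integral_0_inf (\<lambda>x. (\<i> * of_real x) ^ k * cis (t * x)) \<phi>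
    = \<i> ^ k * RS_integral_0_inf (\<lambda>x. cis (t * x)) (\<lambda>x. x ^ k * \<phi> x)
      - of_nat k * \<i> ^ k * fourier_Ici (\<lambda>x. x ^ (k - 1) * \<phi> x) t"
proof -
  have "continuous_on {0..} (\<lambda>x. x ^ k * \<phi> x)" by (intro continuous_intros cont)
  then show ?thesis
    using RS_integral_0_inf_power_cis[OF assms, of t] RS_integral_0_inf_cis[OF _ lim int(2), of t]
    by (cases "k = 0") (simp_all add: right_diff_distrib mult.assoc)
qed

lemma RS_integral_0_inf_power_cis_has_vector_derivative:
  fixes \<phi> :: "real \<Rightarrow> real"
  assumes cont: "continuous_on {0..} \<phi>"
    and int: "\<And>j. j \<le> Suc k \<Longrightarrow> set_integrable lborel {0..} (\<lambda>x. x ^ j * \<phi> x)"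
    and lim: "\<And>j. j \<le> Suc k \<Longrightarrow> ((\<lambda>x. x ^ j * \<phi> x) \<longlongrightarrow> 0) at_top"
  shows "((\<lambda>t. RS_integral_0_inf (\<lambda>x. (\<i> * of_real x) ^ k * cis (t * x)) \<phi>) has_vector_derivative
      RS_integral_0_inf (\<lambda>x. (\<i> * of_real x) ^ Suc k * cis (t * x)) \<phi>) (at t)"
proof -
  define G where "G j = fourier_Ici (\<lambda>x. x ^ j * \<phi> x)" for j
  have G': "(G j has_vector_derivative \<i> * G (Suc j) t) (at t)" if "j \<le> k" for j
    using fourier_Ici_has_vector_derivative[of "\<lambda>x. x ^ j * \<phi> x"] int[of j] int[of "Suc j"] that
    by (simp add: G_def mult.assoc continuous_intros cont)
  have closed_form: "RS_integral_0_inf (\<lambda>x. (\<i> * of_real x) ^ m * cis (t * x)) \<phi>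
      = - (if m = 0 then of_real (\<phi> 0) else 0) - of_nat m * \<i> ^ m * G (m - 1) t - \<i> ^ Suc m * (of_real t * G m t)"
    if "m \<le> Suc k" for m t
  proof -
    have "m - 1 \<le> Suc k" using that by simp
    from RS_integral_0_inf_power_cis[OF cont lim[OF that] int[OF this] int[OF that], of t]
    show ?thesis by (simp add: G_def mult.assoc)
  qed
  have "((\<lambda>t. of_real t * G k t) has_vector_derivative of_real t * (\<i> * G (Suc k) t) + of_real 1 * G k t) (at t)"
    by (rule has_vector_derivative_mult[OF has_vector_derivative_of_real[OF DERIV_ident] G']) simp
  then have "((\<lambda>t. - (if k = 0 then of_real (\<phi> 0) else 0) - of_nat k * \<i> ^ k * G (k - 1) t - \<i> ^ Suc k * (of_real t * G k t))
      has_vector_derivative 0 - of_nat k * \<i> ^ k * (\<i> * G (Suc (k - 1)) t) - \<i> ^ Suc k * (of_real t * (\<i> * G (Suc k) t) + of_real 1 * G k t)) (at t)"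
    by (intro has_vector_derivative_diff has_vector_derivative_const has_vector_derivative_mult_right G') auto
  moreover have "0 - of_nat k * \<i> ^ k * (\<i> * G (Suc (k - 1)) t) - \<i> ^ Suc k * (of_real t * (\<i> * G (Suc k) t) + of_real 1 * G k t)
      = 0 - of_nat (Suc k) * \<i> ^ Suc k * G k t - \<i> ^ Suc (Suc k) * (of_real t * G (Suc k) t)"
    by (cases k) (simp_all add: algebra_simps)
  moreover have "(\<lambda>t. RS_integral_0_inf (\<lambda>x. (\<i> * of_real x) ^ k * cis (t * x)) \<phi>)
      = (\<lambda>t. - (if k = 0 then of_real (\<phi> 0) else 0) - of_nat k * \<i> ^ k * G (k - 1) t - \<i> ^ Suc k * (of_real t * G k t))"
    using closed_form[of k] by auto
  moreover have "RS_integral_0_inf (\<lambda>x. (\<i> * of_real x) ^ Suc k * cis (t * x)) \<phi>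
      = 0 - of_nat (Suc k) * \<i> ^ Suc k * G k t - \<i> ^ Suc (Suc k) * (of_real t * G (Suc k) t)"
    using closed_form[of "Suc k" t, OF order_refl] by (simp only: Suc_not_Zero if_False minus_zero diff_Suc_1)
  ultimately show ?thesis by (simp only:)
qed

lemma RS_integral_0_inf_power_cis_tendsto_0_iff:
  fixes \<phi> :: "real \<Rightarrow> real"
  assumes cont: "continuous_on {0..} \<phi>"
    and bv: "bounded_variation_on {0..} (\<lambda>x. x ^ (n - 1) * \<phi> x)"
    and int: "\<And>j. j \<le> n \<Longrightarrow> set_integrable lborel {0..} (\<lambda>x. x ^ j * \<phi> x)"
    and lim: "\<And>j. j \<le> n \<Longrightarrow> ((\<lambda>x. x ^ j * \<phi> x) \<longlongrightarrow> 0) at_top"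
  shows "((\<lambda>t. RS_integral_0_inf (\<lambda>x. (\<i> * of_real x) ^ n * cis (t * x)) \<phi>) \<longlongrightarrow> 0) at_infinity
    \<longleftrightarrow> (\<exists>L. ((\<lambda>t. RS_integral_0_inf (\<lambda>x. cis (t * x)) (\<lambda>x. x ^ n * \<phi> x)) \<longlongrightarrow> L) at_infinity)"
    (is "(?\<Phi> \<longlongrightarrow> 0) _ \<longleftrightarrow> (\<exists>L. (?\<Psi> \<longlongrightarrow> L) _)")
proof -
  define G where "G = fourier_Ici (\<lambda>x. x ^ (n - 1) * \<phi> x)"
  have \<Phi>_eq: "?\<Phi> t = \<i> ^ n * ?\<Psi> t - of_nat n * \<i> ^ n * G t" for t
    unfolding G_def by (intro RS_integral_0_inf_power_cis_eq cont lim int) auto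
  have G: "(G \<longlongrightarrow> 0) at_infinity"
    unfolding G_def by (intro fourier_Ici_tendsto_0_at_infinity continuous_intros cont int bv) auto
  show ?thesis
  proof
    assume "(?\<Phi> \<longlongrightarrow> 0) at_infinity"
    then have "((\<lambda>t. (?\<Phi> t + of_nat n * \<i> ^ n * G t) / \<i> ^ n) \<longlongrightarrow> (0 + of_nat n * \<i> ^ n * 0) / \<i> ^ n) at_infinity"
      by (intro tendsto_intros G) simp_all
    then show "\<exists>L. (?\<Psi> \<longlongrightarrow> L) at_infinity" by (auto simp: \<Phi>_eq)
  next
    assume "\<exists>L. (?\<Psi> \<longlongrightarrow> L) at_infinity"
    then obtain L where L: "(?\<Psi> \<longlongrightarrow> L) at_infinity" by blast
    have "continuous_on {0..} (\<lambda>x. x ^ n * \<phi> x)" by (intro continuous_intros cont)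
    moreover have "(?\<Psi> \<longlongrightarrow> L) at_top" by (rule filterlim_mono[OF L order_refl at_top_le_at_infinity])
    ultimately have "L = 0" using lim[OF order_refl] int[OF order_refl]
      by (intro RS_integral_0_inf_cis_limit_eq_0)
    with L have "((\<lambda>t. \<i> ^ n * ?\<Psi> t - of_nat n * \<i> ^ n * G t) \<longlongrightarrow> \<i> ^ n * 0 - of_nat n * \<i> ^ n * 0) at_infinity"
      by (intro tendsto_intros G) simp
    then show "(?\<Phi> \<longlongrightarrow> 0) at_infinity" by (simp add: \<Phi>_eq)
  qed
qed

theorem corollary2:
  fixes n :: nat and \<phi> :: "real \<Rightarrow> real"
  assumes cont: "continuous_on {0..} \<phi>"
    and bv: "\<And>m. m \<le> n \<Longrightarrow> bounded_variation_on {0..} (\<lambda>x. x ^ m * \<phi> x)"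
    and little_o: "\<phi> \<in> o[at_top](\<lambda>x. 1 / x ^ n)"
    and L1: "set_integrable lborel {0<..} (\<lambda>x. x ^ n * \<phi> x)"
  defines "\<Phi> \<equiv> (\<lambda>t. RS_integral_0_inf (\<lambda>x. cis (t * x)) \<phi>)"
    and "\<Phi>n \<equiv> (\<lambda>t. RS_integral_0_inf (\<lambda>x. (\<i> * of_real x) ^ n * cis (t * x)) \<phi>)"
    and "\<Psi> \<equiv> (\<lambda>t. RS_integral_0_inf (\<lambda>x. cis (t * x)) (\<lambda>x. x ^ n * \<phi> x))"
  shows "(\<exists>D :: nat \<Rightarrow> real \<Rightarrow> complex.
            D 0 = \<Phi> \<and>
            (\<forall>k<n. \<forall>t>0. (D k has_vector_derivative D (Suc k) t) (at t)) \<and>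
            (\<forall>t>0. D n t = \<Phi>n t))
         \<and> ((\<Phi>n \<longlongrightarrow> 0) at_infinity \<longleftrightarrow> (\<exists>L. (\<Psi> \<longlongrightarrow> L) at_infinity))"
proof
  have int: "set_integrable lborel {0..} (\<lambda>x. x ^ j * \<phi> x)" if "j \<le> n" for j
    using set_integrable_power_mult_Ici[OF cont L1 that] .
  have lim: "((\<lambda>x. x ^ j * \<phi> x) \<longlongrightarrow> 0) at_top" if "j \<le> n" for j
    using power_mult_tendsto_0[OF little_o that] .
  define D where "D k t = RS_integral_0_inf (\<lambda>x. (\<i> * of_real x) ^ k * cis (t * x)) \<phi>" for k t
  have "(D k has_vector_derivative D (Suc k) t) (at t)" if "k < n" for k t
    unfolding D_def[abs_def] using that
    by (intro RS_integral_0_inf_power_cis_has_vector_derivative cont int lim) auto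
  then show "\<exists>D. D 0 = \<Phi> \<and> (\<forall>k<n. \<forall>t>0. (D k has_vector_derivative D (Suc k) t) (at t)) \<and> (\<forall>t>0. D n t = \<Phi>n t)"
    by (intro exI[of _ D]) (simp add: D_def \<Phi>_def \<Phi>n_def fun_eq_iff)
  show "(\<Phi>n \<longlongrightarrow> 0) at_infinity \<longleftrightarrow> (\<exists>L. (\<Psi> \<longlongrightarrow> L) at_infinity)"
    unfolding \<Phi>n_def \<Psi>_def by (intro RS_integral_0_inf_power_cis_tendsto_0_iff cont bv int lim) auto
qed

end
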